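(* Let $\gamma = 32\,\Delta\, s_{\max}^2/\lambda_2$, where $\lambda_2$ is the second smallest eigenvalue of the Laplacian of $G$. Then for every $t\ge 1$ (and any distribution of the initial state $X^0$), \[ \mathbb{E}[\Psi_0(X^t)] \le \left(1-\frac{2}{\gamma}\right)\mathbb{E}[\Psi_0(X^{t-1})] + \frac{n}{4 s_{\max}}. \]
   Context: $G=(V,E)$ is a connected undirected graph on $n\ge2$ vertices (processors) with maximum degree $\Delta$; $\deg(i)$ is the degree and $d_{ij}=\max\{\deg(i),\deg(j)\}$. Its Laplacian $L$ has $L_{ii}=\deg(i)$, $L_{ij}=-1$ if $\{i,j\}\in E$, $0$ otherwise. Processor $i$ has speed $s_i>0$, scaled so the smallest speed is $1$; $s_{\max}=\max_i s_i$, $\mathcal{S}=\sum_i s_i$. There are $m$ unit tasks; in state $x$, $w_i(x)$ is the number of tasks on $i$ and $\ell_i(x)=w_i(x)/s_i$. $\Psi_0(x)=\sum_i (w_i(x)-m s_i/\mathcal{S})^2/s_i$. Protocol with $\alpha=4s_{\max}$: in each round every task, independently, with $i$ its current processor, chooses a uniformly random neighbor $j$; if $\ell_i-\ell_j>1/s_j$ it moves to $j$ with probability $\frac{\deg(i)}{d_{ij}}\cdot\frac{\ell_i-\ell_j}{\alpha(1/s_i+1/s_j)w_i}$, otherwise stays. $X^t$ denotes the state after $t$ rounds. *)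

theory Defs
  imports "HOL-Probability.Probability" "Jordan_Normal_Form.Char_Poly"
begin

definition nbrs :: "(nat \<Rightarrow> nat \<Rightarrow> bool) \<Rightarrow> nat \<Rightarrow> nat \<Rightarrow> nat set" where
  "nbrs E n i = {j. j < n \<and> E i j}"

definition deg :: "(nat \<Rightarrow> nat \<Rightarrow> bool) \<Rightarrow> nat \<Rightarrow> nat \<Rightarrow> nat" where
  "deg E n i = card (nbrs E n i)"

definition max_deg :: "(nat \<Rightarrow> nat \<Rightarrow> bool) \<Rightarrow> nat \<Rightarrow> nat" where
  "max_deg E n = Max (deg E n ` {..<n})"

definition simple_graph :: "(nat \<Rightarrow> nat \<Rightarrow> bool) \<Rightarrow> nat \<Rightarrow> bool" where
  "simple_graph E n \<longleftrightarrow> (\<forall>i j. E i j \<longrightarrow> i < n \<and> j < n \<and> i \<noteq> j \<and> E j i)"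

definition graph_connected :: "(nat \<Rightarrow> nat \<Rightarrow> bool) \<Rightarrow> nat \<Rightarrow> bool" where
  "graph_connected E n \<longleftrightarrow> (\<forall>i<n. \<forall>j<n. (\<lambda>a b. a < n \<and> b < n \<and> E a b)\<^sup>*\<^sup>* i j)"

definition laplacian :: "(nat \<Rightarrow> nat \<Rightarrow> bool) \<Rightarrow> nat \<Rightarrow> real mat" where
  "laplacian E n = mat n n (\<lambda>(i,j). if i = j then real (deg E n i) else if E i j then -1 else 0)"

text \<open>Smallest eigenvalue, and second smallest eigenvalue counted with (algebraic) multiplicity.\<close>
definition lambda1 :: "real mat \<Rightarrow> real" where
  "lambda1 A = Min {k. eigenvalue A k}"

definition lambda2 :: "real mat \<Rightarrow> real" where
  "lambda2 A = Min {k. eigenvalue A k \<and> (k \<noteq> lambda1 A \<or> order (lambda1 A) (char_poly A) \<ge> 2)}"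

text \<open>States: x k is the processor of task k (tasks 0..<m).\<close>
definition load :: "nat \<Rightarrow> (nat \<Rightarrow> nat) \<Rightarrow> nat \<Rightarrow> nat" where
  "load m x i = card {k. k < m \<and> x k = i}"

definition smax :: "nat \<Rightarrow> (nat \<Rightarrow> real) \<Rightarrow> real" where
  "smax n s = Max (s ` {..<n})"

definition Stot :: "nat \<Rightarrow> (nat \<Rightarrow> real) \<Rightarrow> real" where
  "Stot n s = (\<Sum>i<n. s i)"

definition Psi0 :: "nat \<Rightarrow> (nat \<Rightarrow> real) \<Rightarrow> nat \<Rightarrow> (nat \<Rightarrow> nat) \<Rightarrow> real" where
  "Psi0 n s m x = (\<Sum>i<n. (real (load m x i) - real m * s i / Stot n s)\<^sup>2 / s i)"

definition move_prob :: "(nat \<Rightarrow> nat \<Rightarrow> bool) \<Rightarrow> nat \<Rightarrow> (nat \<Rightarrow> real) \<Rightarrow> nat \<Rightarrow> (nat \<Rightarrow> nat) \<Rightarrow> nat \<Rightarrow> nat \<Rightarrow> real" where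
  "move_prob E n s m x i j =
     (let li = real (load m x i) / s i; lj = real (load m x j) / s j;
          dij = max (deg E n i) (deg E n j); alpha = 4 * smax n s in
      if li - lj > 1 / s j
      then real (deg E n i) / real dij * (li - lj) / (alpha * (1 / s i + 1 / s j) * real (load m x i))
      else 0)"

definition task_step :: "(nat \<Rightarrow> nat \<Rightarrow> bool) \<Rightarrow> nat \<Rightarrow> (nat \<Rightarrow> real) \<Rightarrow> nat \<Rightarrow> (nat \<Rightarrow> nat) \<Rightarrow> nat \<Rightarrow> nat pmf" where
  "task_step E n s m x i =
     do { j \<leftarrow> pmf_of_set (nbrs E n i);
          b \<leftarrow> bernoulli_pmf (move_prob E n s m x i j);
          return_pmf (if b then j else i) }"

text \<open>One round: all tasks act independently (tasks outside 0..<m are fixed to processor 0).\<close>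
definition round_step :: "(nat \<Rightarrow> nat \<Rightarrow> bool) \<Rightarrow> nat \<Rightarrow> (nat \<Rightarrow> real) \<Rightarrow> nat \<Rightarrow> (nat \<Rightarrow> nat) \<Rightarrow> (nat \<Rightarrow> nat) pmf" where
  "round_step E n s m x = Pi_pmf {..<m} 0 (\<lambda>k. task_step E n s m x (x k))"

primrec state_dist :: "(nat \<Rightarrow> nat \<Rightarrow> bool) \<Rightarrow> nat \<Rightarrow> (nat \<Rightarrow> real) \<Rightarrow> nat \<Rightarrow> (nat \<Rightarrow> nat) pmf \<Rightarrow> nat \<Rightarrow> (nat \<Rightarrow> nat) pmf" where
  "state_dist E n s m mu0 0 = mu0"
| "state_dist E n s m mu0 (Suc t) = bind_pmf (state_dist E n s m mu0 t) (round_step E n s m)"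

end

theory Submission
  imports Defs
begin

text \<open>
  Given the state x, the tasks move independently, so after one round the load of every
  processor i is a sum of independent indicators, and its second moment is the square of its
  mean plus its variance. The mean changes by the net expected flow into i, so that
  E[Psi0(X')] <= Psi0(x) - 2 sum_ij (l_i - l_j) f_ij + sum_i (net flow)^2/s_i + sum_i var_i/s_i,
  where f_ij is the expected flow from i to j and l = w/s is the normalised load.
  Since f_ij = (l_i - l_j)/(4 s_max d_ij (1/s_i + 1/s_j)) when it is positive, on every edge the quadratic and
  variance terms consume only part of the linear drift, up to an additive 1/(4 s_max deg i);
  summed over the edges this leaves -sum_{l_i > l_j} (l_i - l_j)^2 / (16 Delta s_max) + n/(4 s_max).
  The remaining sum is the Laplacian quadratic form of l. Centred at its mean, l is
  orthogonal to the constants, so by the Rayleigh quotient the form is at least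
  lambda_2 sum_i (l_i - c)^2 >= lambda_2 Psi0(x) / s_max, because
  Psi0(x) = min_c sum_i s_i (l_i - c)^2. Averaging over X^(t-1) gives the claim.
\<close>

section \<open>Expectations over finite product distributions\<close>

lemma integrable_pmf_bounded:
  fixes f :: "'a \<Rightarrow> real"
  assumes "\<And>x. \<bar>f x\<bar> \<le> B"
  shows "integrable (measure_pmf p) f"
  by (rule measure_pmf.integrable_const_bound[where B=B]) (use assms in auto)

lemma abs_expectation_le:
  fixes f :: "'a \<Rightarrow> real"
  assumes "\<And>x. \<bar>f x\<bar> \<le> B"
  shows "\<bar>measure_pmf.expectation p f\<bar> \<le> B"
proof -
  have f: "integrable (measure_pmf p) f" by (rule integrable_pmf_bounded[OF assms])
  have "measure_pmf.expectation p f \<le> measure_pmf.expectation p (\<lambda>_. B)"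
    using assms by (intro integral_mono f) (auto simp: abs_le_iff)
  moreover have "measure_pmf.expectation p (\<lambda>_. -B) \<le> measure_pmf.expectation p f"
  proof (intro integral_mono f)
    show "- B \<le> f x" for x using assms[of x] by linarith
  qed simp
  ultimately show ?thesis by simp
qed

lemma expectation_bind_pmf_bounded:
  fixes f :: "'b \<Rightarrow> real"
  assumes "\<And>x. \<bar>f x\<bar> \<le> B"
  shows "measure_pmf.expectation (bind_pmf M N) f
           = measure_pmf.expectation M (\<lambda>x. measure_pmf.expectation (N x) f)"
  using measurable_measure_pmf[of N] assms unfolding measure_pmf_bind
  by (intro integral_bind[where K="count_space UNIV" and B=B and B'=1])
     (auto intro: measure_pmf.finite_measure)

lemma expectation_Pi_pmf_component:
  fixes P :: "'a \<Rightarrow> 'b pmf" and g :: "'b \<Rightarrow> real"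
  assumes "finite A" "k \<in> A"
  shows "measure_pmf.expectation (Pi_pmf A d P) (\<lambda>y. g (y k)) = measure_pmf.expectation (P k) g"
proof -
  have "map_pmf (\<lambda>y. y k) (Pi_pmf A d P) = P k" using assms by (simp add: Pi_pmf_component)
  then show ?thesis by (metis integral_map_pmf)
qed

lemma expectation_Pi_pmf_pair:
  fixes P :: "'a \<Rightarrow> 'b pmf" and g h :: "'b \<Rightarrow> real"
  assumes "finite A" "k \<in> A" "l \<in> A" "k \<noteq> l"
    and "\<And>v. 0 \<le> g v" "\<And>v. g v \<le> 1" "\<And>v. 0 \<le> h v" "\<And>v. h v \<le> 1"
  shows "measure_pmf.expectation (Pi_pmf A d P) (\<lambda>y. g (y k) * h (y l)) =
         measure_pmf.expectation (P k) g * measure_pmf.expectation (P l) h"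
proof -
  define f where "f = (\<lambda>j v. if j = k then g v else if j = l then h v else 1)"
  have prod_f: "(\<Prod>j\<in>A. f j (y j)) = g (y k) * h (y l)" for y
  proof -
    have "(\<Prod>j\<in>A. f j (y j)) = (\<Prod>j\<in>{k,l}. f j (y j))"
      using assms by (intro prod.mono_neutral_right) (auto simp: f_def)
    then show ?thesis using assms(4) by (simp add: f_def)
  qed
  have "measure_pmf.expectation (Pi_pmf A d P) (\<lambda>y. \<Prod>j\<in>A. f j (y j))
          = (\<Prod>j\<in>A. measure_pmf.expectation (P j) (f j))"
  proof (rule expectation_prod_Pi_pmf[OF assms(1)])
    show "integrable (measure_pmf (P j)) (f j)" for j
      by (rule integrable_pmf_bounded[where B=1]) (use assms in \<open>auto simp: f_def\<close>)
    show "0 \<le> f j v" for j v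
      using assms by (auto simp: f_def)
  qed
  also have "\<dots> = (\<Prod>j\<in>{k,l}. measure_pmf.expectation (P j) (f j))"
    using assms by (intro prod.mono_neutral_right) (auto simp: f_def)
  also have "\<dots> = measure_pmf.expectation (P k) g * measure_pmf.expectation (P l) h"
    using assms(4) by (simp add: f_def)
  finally show ?thesis unfolding prod_f .
qed

text \<open>A plain 0/1 function rather than \<open>indicator {i}\<close>, whose simp rules would turn the sums
  of indicators below into cardinalities.\<close>

definition ind :: "'b \<Rightarrow> 'b \<Rightarrow> real" where
  "ind i v = (if v = i then 1 else 0)"

lemma ind_mult_self: "ind i v * ind i v = ind i v"
  by (simp add: ind_def)

lemma sum_ind_mult:
  assumes "finite A" "i \<in> A"
  shows "(\<Sum>a\<in>A. ind i a * G a) = (G i :: real)"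
proof -
  have "(\<Sum>a\<in>A. ind i a * G a) = (\<Sum>a\<in>A. if a = i then G a else 0)"
    by (intro sum.cong) (auto simp: ind_def)
  then show ?thesis using assms by simp
qed

lemma expectation_Pi_pmf_ind_mult:
  fixes P :: "'a \<Rightarrow> 'b pmf"
  assumes "finite A" "k \<in> A" "l \<in> A"
  shows "measure_pmf.expectation (Pi_pmf A d P) (\<lambda>y. ind i (y k) * ind i (y l))
           = (if k = l then measure_pmf.expectation (P k) (ind i)
              else measure_pmf.expectation (P k) (ind i) * measure_pmf.expectation (P l) (ind i))"
proof (cases "k = l")
  case True
  then show ?thesis
    using expectation_Pi_pmf_component[OF assms(1,2), of d P "ind i"] by (simp add: ind_mult_self)
next
  case False
  then show ?thesis by (subst expectation_Pi_pmf_pair) (use assms in \<open>auto simp: ind_def\<close>)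
qed

lemma expectation_Pi_pmf_count_sq:
  fixes P :: "'a \<Rightarrow> 'b pmf" and c :: real and i :: 'b
  assumes A: "finite A"
  defines "\<pi> \<equiv> (\<lambda>k. measure_pmf.expectation (P k) (ind i))"
  shows "measure_pmf.expectation (Pi_pmf A d P) (\<lambda>y. ((\<Sum>k\<in>A. ind i (y k)) - c)\<^sup>2)
           = ((\<Sum>k\<in>A. \<pi> k) - c)\<^sup>2 + (\<Sum>k\<in>A. \<pi> k * (1 - \<pi> k))"
proof -
  let ?E = "measure_pmf.expectation (Pi_pmf A d P)"
  have int1: "integrable (Pi_pmf A d P) (\<lambda>y. ind i (y k))" for k
    by (rule integrable_pmf_bounded[where B=1]) (simp add: ind_def)
  have int2: "integrable (Pi_pmf A d P) (\<lambda>y. ind i (y k) * ind i (y l))" for k l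
    by (rule integrable_pmf_bounded[where B=1]) (simp add: ind_def)
  have sq: "((\<Sum>k\<in>A. ind i (y k)) - c)\<^sup>2
      = (\<Sum>k\<in>A. \<Sum>l\<in>A. ind i (y k) * ind i (y l)) - 2 * c * (\<Sum>k\<in>A. ind i (y k)) + c\<^sup>2" for y
    by (simp add: power2_eq_square sum_product algebra_simps)
  have mean: "?E (\<lambda>y. ind i (y k)) = \<pi> k" if "k \<in> A" for k
    unfolding \<pi>_def by (rule expectation_Pi_pmf_component[OF A that])
  have moment2: "?E (\<lambda>y. ind i (y k) * ind i (y l)) = (if k = l then \<pi> k else \<pi> k * \<pi> l)"
    if "k \<in> A" "l \<in> A" for k l
    unfolding \<pi>_def by (rule expectation_Pi_pmf_ind_mult[OF A that])
  have diag: "(\<Sum>l\<in>A. if k = l then \<pi> k else \<pi> k * \<pi> l)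
      = (\<Sum>l\<in>A. \<pi> k * \<pi> l) + \<pi> k * (1 - \<pi> k)" if "k \<in> A" for k
  proof -
    have "(\<Sum>l\<in>A. if k = l then \<pi> k else \<pi> k * \<pi> l)
        = (\<Sum>l\<in>A. \<pi> k * \<pi> l + (if k = l then \<pi> k * (1 - \<pi> k) else 0))"
      by (rule sum.cong) (auto simp: algebra_simps)
    then show ?thesis using that A by (simp add: sum.distrib)
  qed
  have "?E (\<lambda>y. ((\<Sum>k\<in>A. ind i (y k)) - c)\<^sup>2)
      = (\<Sum>k\<in>A. \<Sum>l\<in>A. ?E (\<lambda>y. ind i (y k) * ind i (y l)))
          - 2 * c * (\<Sum>k\<in>A. ?E (\<lambda>y. ind i (y k))) + c\<^sup>2"
    unfolding sq using int1 int2
    by (simp add: Bochner_Integration.integral_sum integrable_sum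
        Bochner_Integration.integral_diff Bochner_Integration.integral_add)
  also have "\<dots> = (\<Sum>k\<in>A. \<Sum>l\<in>A. \<pi> k * \<pi> l) + (\<Sum>k\<in>A. \<pi> k * (1 - \<pi> k))
                      - 2 * c * (\<Sum>k\<in>A. \<pi> k) + c\<^sup>2"
    using mean moment2 diag by (simp add: sum.distrib)
  finally show ?thesis by (simp add: power2_eq_square sum_product algebra_simps)
qed

lemma linear_quadratic_nonneg_imp_zero:
  fixes a b :: real
  assumes "\<And>t. 0 \<le> a * t + b * t\<^sup>2"
  shows "a = 0"
proof (rule ccontr)
  assume a: "a \<noteq> 0"
  define c where "c = \<bar>b\<bar> + 1"
  have c: "c > 0" "b \<le> c" unfolding c_def by auto
  have "a * (- a / (2 * c)) + b * (- a / (2 * c))\<^sup>2 = a\<^sup>2 * (b / (4 * c\<^sup>2) - 1 / (2 * c))"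
    using c by (simp add: power2_eq_square field_simps)
  also have "b / (4 * c\<^sup>2) - 1 / (2 * c) < 0"
  proof -
    have "b / (4 * c\<^sup>2) \<le> c / (4 * c\<^sup>2)" using c by (intro divide_right_mono) auto
    also have "\<dots> < 1 / (2 * c)" using c by (simp add: power2_eq_square field_simps)
    finally show ?thesis by simp
  qed
  then have "a\<^sup>2 * (b / (4 * c\<^sup>2) - 1 / (2 * c)) < 0" using a by (simp add: mult_pos_neg)
  finally show False using assms[of "- a / (2 * c)"] by simp
qed

text \<open>The drift across one edge (i, j) with l_i - l_j = \<open>\<delta>\<close> > 1/s_j: here
  \<open>\<sigma>\<close> = 1/s_i + 1/s_j, M = s_max, g, d, D are deg i, d_ij and \<open>\<Delta>\<close>, and
  \<open>\<delta> / (d * (4 * M) * \<sigma>)\<close> is the expected flow from i to j.\<close>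

lemma drift_term_inequality:
  fixes \<delta> \<sigma> d D M g :: real
  assumes \<delta>: "\<delta> > 0" and \<sigma>: "0 < \<sigma>" "\<sigma> \<le> 2" and M: "1 \<le> M"
    and g: "1 \<le> g" "g \<le> d" and D: "d \<le> D"
  shows "- 2 * (\<delta> * (\<delta> / (d * (4 * M) * \<sigma>))) + \<delta> * (\<delta> / (d * (4 * M) * \<sigma>)) / (4 * M)
           + \<delta> / (d * (4 * M)) + \<delta>\<^sup>2 / (16 * D * M) \<le> 1 / (4 * M * g)"
proof -
  define X where "X = \<delta> * (\<delta> / (d * (4 * M) * \<sigma>))"
  have pos: "d > 0" "D > 0" "M > 0" using g D M by auto
  have X_eq: "X = \<delta>\<^sup>2 / (4 * d * M * \<sigma>)"
    unfolding X_def by (simp add: power2_eq_square mult.commute mult.left_commute)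
  have "4 * d * M * \<sigma> \<le> 8 * d * M" using \<sigma> pos by simp
  then have X_ge: "\<delta>\<^sup>2 / (8 * d * M) \<le> X"
    unfolding X_eq using \<sigma> pos \<delta> by (intro divide_left_mono) (auto intro!: mult_pos_pos)
  have "X \<ge> 0" unfolding X_eq using \<sigma> pos by simp
  then have "X / (4 * M) \<le> X / 4" using M by (intro divide_left_mono) auto
  then have "- 2 * X + X / (4 * M) \<le> - (7 / 4) * X" by linarith
  also have "\<dots> \<le> - (7 / 4) * (\<delta>\<^sup>2 / (8 * d * M))" using X_ge by linarith
  finally have linear: "- 2 * X + X / (4 * M) \<le> - (7 / 4) * (\<delta>\<^sup>2 / (8 * d * M))" .
  have quadratic: "\<delta>\<^sup>2 / (16 * D * M) \<le> \<delta>\<^sup>2 / (16 * d * M)"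
    using D pos by (intro divide_left_mono) auto
  have "- 2 * X + X / (4 * M) + \<delta> / (d * (4 * M)) + \<delta>\<^sup>2 / (16 * D * M)
        \<le> - (7 / 4) * (\<delta>\<^sup>2 / (8 * d * M)) + \<delta> / (d * (4 * M)) + \<delta>\<^sup>2 / (16 * d * M)"
    using linear quadratic by linarith
  also have "\<dots> = (- (5 / 32) * \<delta>\<^sup>2 + \<delta> / 4) / (d * M)"
    using pos by (simp add: field_simps power2_eq_square)
  also have "\<dots> \<le> (1 / 10) / (d * M)"
  proof -
    have "0 \<le> (5 / 32) * (\<delta> - 4 / 5)\<^sup>2" by simp
    then have "- (5 / 32) * \<delta>\<^sup>2 + \<delta> / 4 \<le> 1 / 10" by (simp add: power2_eq_square algebra_simps)
    then show ?thesis by (rule divide_right_mono) (use pos in simp)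
  qed
  also have "\<dots> \<le> 1 / (4 * M * g)"
  proof -
    have "4 * M * g \<le> 10 * (d * M)" using g pos by (simp add: mult_right_mono)
    then show ?thesis using g pos by (simp add: divide_simps)
  qed
  finally show ?thesis unfolding X_def .
qed

section \<open>The Laplacian quadratic form\<close>

locale connected_graph =
  fixes E :: "nat \<Rightarrow> nat \<Rightarrow> bool" and n :: nat
  assumes two_le_n: "n \<ge> 2" and simple: "simple_graph E n" and connected: "graph_connected E n"
begin

abbreviation N where "N i \<equiv> nbrs E n i"

lemma finite_nbrs [simp]: "finite (N i)"
  unfolding nbrs_def by auto

lemma nbrs_less: "j \<in> N i \<Longrightarrow> j < n"
  unfolding nbrs_def by auto

lemma nbrs_sym: "j \<in> N i \<Longrightarrow> i < n \<Longrightarrow> i \<in> N j"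
  using simple unfolding nbrs_def simple_graph_def by auto

lemma nbrs_irrefl: "j \<in> N i \<Longrightarrow> j \<noteq> i"
  using simple unfolding nbrs_def simple_graph_def by auto

lemma deg_ge_1: "i < n \<Longrightarrow> deg E n i \<ge> 1"
proof -
  assume i: "i < n"
  define j where "j = (if i = 0 then 1 else 0 :: nat)"
  have j: "j < n" "j \<noteq> i" using two_le_n i unfolding j_def by auto
  have "(\<lambda>a b. a < n \<and> b < n \<and> E a b)\<^sup>*\<^sup>* i j"
    using connected i j unfolding graph_connected_def by auto
  then obtain k where "E i k" "k < n"
    using j(2) by (cases rule: converse_rtranclpE) auto
  then have "N i \<noteq> {}" by (auto simp: nbrs_def)
  then show ?thesis unfolding deg_def by (simp add: Suc_leI card_gt_0_iff)
qed

lemma nbrs_nonempty: "i < n \<Longrightarrow> N i \<noteq> {}"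
  using deg_ge_1[of i] unfolding deg_def by auto

text \<open>Sum over the ordered pairs \<open>(i, j)\<close> with \<open>{i, j} \<in> E\<close>; every edge is counted twice.\<close>

definition edge_sum :: "(nat \<Rightarrow> nat \<Rightarrow> real) \<Rightarrow> real" where
  "edge_sum f = (\<Sum>i<n. \<Sum>j\<in>N i. f i j)"

lemma edge_sum_swap: "edge_sum f = edge_sum (\<lambda>i j. f j i)"
proof -
  define A where "A = {(i, j). i < n \<and> j < n \<and> E i j}"
  have sum_A: "edge_sum g = (\<Sum>(i, j)\<in>A. g i j)" for g
  proof -
    have Sigma_A: "Sigma {..<n} N = A" unfolding A_def nbrs_def by auto
    show ?thesis unfolding edge_sum_def Sigma_A[symmetric] by (subst sum.Sigma) auto
  qed
  have "(\<Sum>(i, j)\<in>A. f i j) = (\<Sum>(i, j)\<in>A. f j i)"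
    by (rule sum.reindex_bij_witness[where i="\<lambda>(i, j). (j, i)" and j="\<lambda>(i, j). (j, i)"])
       (use simple in \<open>auto simp: A_def simple_graph_def\<close>)
  then show ?thesis unfolding sum_A .
qed

lemma edge_sum_add: "edge_sum (\<lambda>i j. f i j + g i j) = edge_sum f + edge_sum g"
  unfolding edge_sum_def by (simp add: sum.distrib)

lemma edge_sum_diff: "edge_sum (\<lambda>i j. f i j - g i j) = edge_sum f - edge_sum g"
  unfolding edge_sum_def by (simp add: sum_subtractf)

lemma edge_sum_cmult: "edge_sum (\<lambda>i j. c * f i j) = c * edge_sum f"
  unfolding edge_sum_def by (simp add: sum_distrib_left)

lemma edge_sum_divide: "edge_sum (\<lambda>i j. f i j / c) = edge_sum f / c"
  unfolding edge_sum_def by (simp add: sum_divide_distrib)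

lemma edge_sum_mono:
  "(\<And>i j. i < n \<Longrightarrow> j \<in> N i \<Longrightarrow> f i j \<le> g i j) \<Longrightarrow> edge_sum f \<le> edge_sum g"
  unfolding edge_sum_def by (intro sum_mono) auto

lemma edge_sum_cong:
  "(\<And>i j. i < n \<Longrightarrow> j \<in> N i \<Longrightarrow> f i j = g i j) \<Longrightarrow> edge_sum f = edge_sum g"
  unfolding edge_sum_def by (intro sum.cong) auto

text \<open>laplace y i is the i-th entry of L y, and dirichlet y = y^T L y.\<close>

definition laplace :: "(nat \<Rightarrow> real) \<Rightarrow> nat \<Rightarrow> real" where
  "laplace y i = real (deg E n i) * y i - (\<Sum>j\<in>N i. y j)"

definition dirichlet :: "(nat \<Rightarrow> real) \<Rightarrow> real" where
  "dirichlet y = edge_sum (\<lambda>i j. (y i - y j)\<^sup>2) / 2"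

lemma edge_sum_bilinear:
  "edge_sum (\<lambda>i j. (y i - y j) * (v i - v j)) / 2 = (\<Sum>i<n. v i * laplace y i)"
proof -
  have expand: "(y i - y j) * (v i - v j) = y i * v i - y j * v i - (y i * v j - y j * v j)" for i j
    by (simp add: algebra_simps)
  have swap1: "edge_sum (\<lambda>i j. y j * v j) = edge_sum (\<lambda>i j. y i * v i)"
    by (rule edge_sum_swap)
  have swap2: "edge_sum (\<lambda>i j. y i * v j) = edge_sum (\<lambda>i j. y j * v i)"
    by (rule edge_sum_swap)
  have "edge_sum (\<lambda>i j. (y i - y j) * (v i - v j))
      = 2 * (edge_sum (\<lambda>i j. y i * v i) - edge_sum (\<lambda>i j. y j * v i))"
    unfolding expand edge_sum_diff swap1 swap2 by simp
  also have "edge_sum (\<lambda>i j. y i * v i) - edge_sum (\<lambda>i j. y j * v i) = (\<Sum>i<n. v i * laplace y i)"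
    unfolding edge_sum_def laplace_def deg_def
    by (simp add: sum_subtractf[symmetric] sum_distrib_left right_diff_distrib ac_simps)
  finally show ?thesis by simp
qed

lemma dirichlet_eq_sum: "dirichlet y = (\<Sum>i<n. y i * laplace y i)"
  using edge_sum_bilinear[of y y] unfolding dirichlet_def by (simp add: power2_eq_square)

lemma dirichlet_nonneg: "dirichlet y \<ge> 0"
  unfolding dirichlet_def edge_sum_def by (intro divide_nonneg_pos sum_nonneg) auto

lemma sum_laplace: "(\<Sum>i<n. laplace y i) = 0"
  using edge_sum_bilinear[of y "\<lambda>_. 1"] by (simp add: edge_sum_def)

lemma dirichlet_cong: "(\<And>i. i < n \<Longrightarrow> y i = z i) \<Longrightarrow> dirichlet y = dirichlet z"
  unfolding dirichlet_def
  by (intro arg_cong[where f="\<lambda>x. x / 2"] edge_sum_cong) (auto dest: nbrs_less)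

lemma dirichlet_scale: "dirichlet (\<lambda>i. c * y i) = c\<^sup>2 * dirichlet y"
proof -
  have "edge_sum (\<lambda>i j. (c * y i - c * y j)\<^sup>2) = edge_sum (\<lambda>i j. c\<^sup>2 * (y i - y j)\<^sup>2)"
    by (intro edge_sum_cong) (simp add: power2_eq_square algebra_simps)
  then show ?thesis unfolding dirichlet_def edge_sum_cmult by simp
qed

lemma dirichlet_add_scaled:
  "dirichlet (\<lambda>i. y i + t * v i) = dirichlet y + 2 * t * (\<Sum>i<n. v i * laplace y i) + t\<^sup>2 * dirichlet v"
proof -
  have "edge_sum (\<lambda>i j. (y i + t * v i - (y j + t * v j))\<^sup>2) =
        edge_sum (\<lambda>i j. (y i - y j)\<^sup>2 + (2 * t) * ((y i - y j) * (v i - v j)) + t\<^sup>2 * (v i - v j)\<^sup>2)"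
    by (intro edge_sum_cong) (simp add: power2_eq_square algebra_simps)
  also have "\<dots> = edge_sum (\<lambda>i j. (y i - y j)\<^sup>2) + (2 * t) * edge_sum (\<lambda>i j. (y i - y j) * (v i - v j))
       + t\<^sup>2 * edge_sum (\<lambda>i j. (v i - v j)\<^sup>2)"
    by (simp add: edge_sum_add edge_sum_cmult)
  finally show ?thesis using edge_sum_bilinear[of y v] unfolding dirichlet_def by (simp add: field_simps)
qed

lemma dirichlet_eq_0_imp_const:
  assumes "dirichlet y = 0" "i < n" "j < n"
  shows "y i = y j"
proof -
  have "edge_sum (\<lambda>i j. (y i - y j)\<^sup>2) = 0" using assms(1) unfolding dirichlet_def by simp
  then have "\<forall>i<n. \<forall>j\<in>N i. (y i - y j)\<^sup>2 = 0"
    unfolding edge_sum_def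
    by (subst (asm) sum_nonneg_eq_0_iff) (auto intro!: sum_nonneg simp: sum_nonneg_eq_0_iff)
  then have edge: "a < n \<Longrightarrow> b < n \<Longrightarrow> E a b \<Longrightarrow> y a = y b" for a b
    by (auto simp: nbrs_def)
  have "(\<lambda>a b. a < n \<and> b < n \<and> E a b)\<^sup>*\<^sup>* i j"
    using connected assms unfolding graph_connected_def by auto
  then show ?thesis by (induction rule: rtranclp_induct) (auto dest: edge)
qed

lemma dirichlet_neq_0_if_mean_zero:
  assumes mean: "(\<Sum>i<n. y i) = 0" and nz: "\<exists>i<n. y i \<noteq> 0"
  shows "dirichlet y \<noteq> 0"
proof
  assume "dirichlet y = 0"
  then have const: "y i = y 0" if "i < n" for i
    by (rule dirichlet_eq_0_imp_const[OF _ that]) (use two_le_n in simp)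
  have "(\<Sum>i<n. y i) = (\<Sum>i<n. y 0)"
    by (intro sum.cong refl) (use const in blast)
  then have "y 0 = 0" using mean two_le_n by simp
  then show False using const nz by metis
qed

section \<open>The second eigenvalue as a Rayleigh quotient\<close>

lemma continuous_on_coordinate [continuous_intros]: "continuous_on A (\<lambda>z::nat \<Rightarrow> real. z i)"
  by (rule continuous_on_subset[OF continuous_on_product_coordinates]) auto

lemma continuous_on_dirichlet: "continuous_on A dirichlet"
  unfolding dirichlet_def[abs_def] edge_sum_def by (intro continuous_intros) auto

text \<open>The box constraint follows from the other two on \<open>{..<n}\<close>; it only serves to make the
  set compact in the product topology of \<open>nat \<Rightarrow> real\<close>.\<close>

definition unit_mean_zero :: "(nat \<Rightarrow> real) set" where
  "unit_mean_zero = {z. (\<forall>i. z i \<in> (if i < n then {-1..1} else {0}))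
                        \<and> (\<Sum>i<n. z i) = 0 \<and> (\<Sum>i<n. (z i)\<^sup>2) = 1}"

lemma compact_unit_mean_zero: "compact unit_mean_zero"
proof -
  define B where "B = Pi UNIV (\<lambda>i. if i < n then {-1..1} else {0::real})"
  have "compactin (product_topology (\<lambda>i. euclideanreal) UNIV)
          (PiE UNIV (\<lambda>i. if i < n then {-1..1} else {0::real}))"
    by (subst compactin_PiE) auto
  then have "compact B"
    unfolding B_def by (simp add: euclidean_product_topology compactin_euclidean_iff PiE_UNIV_domain)
  moreover have "closed ({z::nat \<Rightarrow> real. (\<Sum>i<n. z i) = 0} \<inter> {z. (\<Sum>i<n. (z i)\<^sup>2) = 1})"
    by (intro closed_Int closed_Collect_eq continuous_intros)
  moreover have "unit_mean_zero = B \<inter> ({z. (\<Sum>i<n. z i) = 0} \<inter> {z. (\<Sum>i<n. (z i)\<^sup>2) = 1})"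
    unfolding unit_mean_zero_def B_def Pi_def by blast
  ultimately show ?thesis by (simp add: compact_Int_closed)
qed

lemma unit_mean_zero_nonempty: "unit_mean_zero \<noteq> {}"
proof -
  define a :: real where "a = 1 / sqrt 2"
  define z where "z = (\<lambda>i::nat. if i = 0 then a else if i = 1 then -a else 0)"
  have sum_01: "(\<Sum>i<n. f i) = f 0 + f 1" if "\<And>i. i \<noteq> 0 \<Longrightarrow> i \<noteq> 1 \<Longrightarrow> f i = 0" for f :: "nat \<Rightarrow> real"
  proof -
    have "(\<Sum>i<n. f i) = (\<Sum>i\<in>{0,1}. f i)"
      using two_le_n that by (intro sum.mono_neutral_right) auto
    then show ?thesis by simp
  qed
  have "a\<^sup>2 = 1/2" unfolding a_def by (simp add: power_divide)
  then have "(\<Sum>i<n. (z i)\<^sup>2) = 1" by (subst sum_01) (auto simp: z_def)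
  moreover have "(\<Sum>i<n. z i) = 0" by (subst sum_01) (auto simp: z_def)
  moreover have "\<bar>a\<bar> \<le> 1" unfolding a_def by (simp add: real_sqrt_ge_one)
  then have "\<forall>i. z i \<in> (if i < n then {-1..1} else {0})"
    using two_le_n by (auto simp: z_def)
  ultimately have "z \<in> unit_mean_zero" unfolding unit_mean_zero_def by auto
  then show ?thesis by auto
qed

lemma dirichlet_ge_if_ge_on_unit_mean_zero:
  assumes min: "\<forall>z\<in>unit_mean_zero. \<mu> \<le> dirichlet z" and mean: "(\<Sum>i<n. z i) = 0"
  shows "\<mu> * (\<Sum>i<n. (z i)\<^sup>2) \<le> dirichlet z"
proof (cases "(\<Sum>i<n. (z i)\<^sup>2) = 0")
  case True
  then show ?thesis using dirichlet_nonneg[of z] by simp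
next
  case False
  define r where "r = sqrt (\<Sum>i<n. (z i)\<^sup>2)"
  have pos: "(\<Sum>i<n. (z i)\<^sup>2) > 0" using False by (simp add: sum_nonneg order_le_neq_trans)
  then have r: "r > 0" "r\<^sup>2 = (\<Sum>i<n. (z i)\<^sup>2)" unfolding r_def by auto
  define z' where "z' = (\<lambda>i. if i < n then z i / r else 0)"
  have sq': "(\<Sum>i<n. (z' i)\<^sup>2) = 1"
    using r False unfolding z'_def by (simp add: power_divide sum_divide_distrib[symmetric])
  have "z' \<in> unit_mean_zero"
    unfolding unit_mean_zero_def
  proof (intro CollectI conjI allI)
    show "(\<Sum>i<n. z' i) = 0"
      unfolding z'_def using mean by (simp add: sum_divide_distrib[symmetric])
    show "(\<Sum>i<n. (z' i)\<^sup>2) = 1" by (fact sq')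
    show "z' i \<in> (if i < n then {-1..1} else {0})" for i
    proof (cases "i < n")
      case True
      have "(z' i)\<^sup>2 \<le> (\<Sum>i<n. (z' i)\<^sup>2)" using True by (intro member_le_sum) auto
      then have "\<bar>z' i\<bar> \<le> 1" using sq' by (simp add: abs_square_le_1)
      then show ?thesis using True by auto
    qed (simp add: z'_def)
  qed
  then have "\<mu> \<le> dirichlet z'" using min by auto
  also have "dirichlet z' = dirichlet (\<lambda>i. (1 / r) * z i)"
    by (intro dirichlet_cong) (auto simp: z'_def)
  also have "\<dots> = dirichlet z / r\<^sup>2"
    using dirichlet_scale[of "1 / r" z] by (simp add: power_divide)
  finally have "\<mu> \<le> dirichlet z / (\<Sum>i<n. (z i)\<^sup>2)" using r by simp
  then show ?thesis using pos by (simp add: pos_le_divide_eq)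
qed

text \<open>A minimiser y of the Rayleigh quotient is an eigenvector: for v = L y - \<open>\<mu>\<close> y the
  quadratic polynomial dirichlet (y + t v) - \<open>\<mu>\<close> ||y + t v||^2 in t is nonnegative and vanishes
  at t = 0, so its linear coefficient 2 ||v||^2 is zero.\<close>

lemma laplace_eq_if_minimizer:
  assumes mean: "(\<Sum>i<n. y i) = 0" and unit: "(\<Sum>i<n. (y i)\<^sup>2) = 1"
    and min: "\<And>z. (\<Sum>i<n. z i) = 0 \<Longrightarrow> dirichlet y * (\<Sum>i<n. (z i)\<^sup>2) \<le> dirichlet z"
    and i: "i < n"
  shows "laplace y i = dirichlet y * y i"
proof -
  define \<mu> where "\<mu> = dirichlet y"
  define v where "v = (\<lambda>i. if i < n then laplace y i - \<mu> * y i else 0)"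
  have v_mean: "(\<Sum>i<n. v i) = 0"
    unfolding v_def using sum_laplace[of y] mean
    by (simp add: sum_subtractf sum_distrib_left[symmetric])
  have v_sq: "(\<Sum>i<n. (v i)\<^sup>2) = (\<Sum>i<n. v i * laplace y i) - \<mu> * (\<Sum>i<n. y i * v i)"
  proof -
    have "(\<Sum>i<n. (v i)\<^sup>2) = (\<Sum>i<n. v i * laplace y i - \<mu> * (y i * v i))"
      by (intro sum.cong) (auto simp: v_def power2_eq_square algebra_simps)
    then show ?thesis by (simp add: sum_subtractf sum_distrib_left)
  qed
  have "0 \<le> (2 * (\<Sum>i<n. v i * laplace y i) - 2 * \<mu> * (\<Sum>i<n. y i * v i)) * t
             + (dirichlet v - \<mu> * (\<Sum>i<n. (v i)\<^sup>2)) * t\<^sup>2" for t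
  proof -
    have "(\<Sum>i<n. y i + t * v i) = 0"
      using mean v_mean by (simp add: sum.distrib sum_distrib_left[symmetric])
    then have "\<mu> * (\<Sum>i<n. (y i + t * v i)\<^sup>2) \<le> dirichlet (\<lambda>i. y i + t * v i)"
      unfolding \<mu>_def by (rule min)
    moreover have "(\<Sum>i<n. (y i + t * v i)\<^sup>2)
        = 1 + 2 * t * (\<Sum>i<n. y i * v i) + t\<^sup>2 * (\<Sum>i<n. (v i)\<^sup>2)"
    proof -
      have "(\<Sum>i<n. (y i + t * v i)\<^sup>2) = (\<Sum>i<n. (y i)\<^sup>2 + 2 * t * (y i * v i) + t\<^sup>2 * (v i)\<^sup>2)"
        by (intro sum.cong) (simp_all add: power2_eq_square algebra_simps)
      then show ?thesis using unit by (simp add: sum.distrib sum_distrib_left)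
    qed
    ultimately show ?thesis
      unfolding dirichlet_add_scaled \<mu>_def[symmetric] by (simp add: algebra_simps)
  qed
  then have "2 * (\<Sum>i<n. v i * laplace y i) - 2 * \<mu> * (\<Sum>i<n. y i * v i) = 0"
    by (intro linear_quadratic_nonneg_imp_zero[where b="dirichlet v - \<mu> * (\<Sum>i<n. (v i)\<^sup>2)"])
  then have "(\<Sum>i<n. (v i)\<^sup>2) = 0" using v_sq by simp
  then have "(v i)\<^sup>2 = 0" using i by (subst (asm) sum_nonneg_eq_0_iff) auto
  then show ?thesis using i unfolding v_def \<mu>_def by simp
qed

abbreviation "Lap \<equiv> laplacian E n"

lemma laplacian_carrier: "Lap \<in> carrier_mat n n"
  by (simp add: laplacian_def)

lemma dim_row_laplacian [simp]: "dim_row Lap = n"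
  by (simp add: laplacian_def)

lemma laplacian_mult_vec:
  assumes "i < n"
  shows "(Lap *\<^sub>v vec n y) $ i = laplace y i"
proof -
  have "(Lap *\<^sub>v vec n y) $ i
      = (\<Sum>j\<in>{0..<n}. (if i = j then real (deg E n i) else if E i j then -1 else 0) * y j)"
    using assms by (simp add: laplacian_def mult_mat_vec_def scalar_prod_def)
  also have "\<dots> = (\<Sum>j<n. (if j = i then real (deg E n i) * y j else 0) + (if E i j then - y j else 0))"
    using simple unfolding simple_graph_def by (intro sum.cong) auto
  also have "\<dots> = real (deg E n i) * y i - (\<Sum>j\<in>N i. y j)"
    using assms by (simp add: sum.distrib sum.inter_filter[symmetric] nbrs_def sum_negf)
  finally show ?thesis unfolding laplace_def .
qed

lemma eigenvalue_laplacianI: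
  assumes nz: "\<exists>i<n. y i \<noteq> 0" and eq: "\<And>i. i < n \<Longrightarrow> laplace y i = \<mu> * y i"
  shows "eigenvalue Lap \<mu>"
proof -
  have "vec n y \<noteq> 0\<^sub>v n"
  proof
    assume zero: "vec n y = 0\<^sub>v n"
    obtain i where "i < n" "y i \<noteq> 0" using nz by auto
    moreover have "vec n y $ i = 0\<^sub>v n $ i" using zero by simp
    ultimately show False by simp
  qed
  moreover have "Lap *\<^sub>v vec n y = \<mu> \<cdot>\<^sub>v vec n y"
  proof (rule eq_vecI)
    fix i assume "i < dim_vec (\<mu> \<cdot>\<^sub>v vec n y)"
    then have i: "i < n" by simp
    have "(Lap *\<^sub>v vec n y) $ i = laplace y i" by (rule laplacian_mult_vec[OF i])
    then show "(Lap *\<^sub>v vec n y) $ i = (\<mu> \<cdot>\<^sub>v vec n y) $ i" using i by (simp add: eq)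
  qed simp
  ultimately have "eigenvector Lap (vec n y) \<mu>"
    unfolding eigenvector_def by simp
  then show ?thesis unfolding eigenvalue_def by blast
qed

lemma laplacian_eigenvalue_nonneg:
  assumes "eigenvalue Lap k"
  shows "k \<ge> 0"
proof -
  obtain v where v: "v \<in> carrier_vec n" "v \<noteq> 0\<^sub>v n" "Lap *\<^sub>v v = k \<cdot>\<^sub>v v"
    using assms unfolding eigenvalue_def eigenvector_def by auto
  define y where "y = (\<lambda>i. v $ i)"
  have v_eq: "v = vec n y" using v(1) unfolding y_def by (intro eq_vecI) auto
  have laplace_y: "laplace y i = k * y i" if "i < n" for i
  proof -
    have "laplace y i = (Lap *\<^sub>v vec n y) $ i" by (rule laplacian_mult_vec[OF that, symmetric])
    also have "\<dots> = (k \<cdot>\<^sub>v vec n y) $ i" using v(3) v_eq by simp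
    finally show ?thesis using that by simp
  qed
  have "dirichlet y = (\<Sum>i<n. k * (y i)\<^sup>2)"
    unfolding dirichlet_eq_sum by (intro sum.cong) (auto simp: laplace_y power2_eq_square)
  then have dirichlet_y: "dirichlet y = k * (\<Sum>i<n. (y i)\<^sup>2)"
    by (simp add: sum_distrib_left)
  have "\<exists>i<n. y i \<noteq> 0"
  proof (rule ccontr)
    assume "\<not> ?thesis"
    then have "v = 0\<^sub>v n" using v(1) unfolding y_def by (intro eq_vecI) auto
    with v(2) show False by simp
  qed
  then obtain i where "i < n" "y i \<noteq> 0" by auto
  then have "0 < (y i)\<^sup>2" by simp
  also have "\<dots> \<le> (\<Sum>i<n. (y i)\<^sup>2)" using \<open>i < n\<close> by (intro member_le_sum) auto
  finally have "0 < (\<Sum>i<n. (y i)\<^sup>2)" .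
  then show ?thesis using dirichlet_nonneg[of y] dirichlet_y by (simp add: zero_le_mult_iff)
qed

lemma finite_laplacian_eigenvalues: "finite {k. eigenvalue Lap k}"
proof -
  have "char_poly Lap \<noteq> 0"
    using degree_monic_char_poly[OF laplacian_carrier] by auto
  then have "finite {k. poly (char_poly Lap) k = 0}" by (rule poly_roots_finite)
  then show ?thesis using eigenvalue_root_char_poly[OF laplacian_carrier] by simp
qed

lemma lambda1_laplacian: "lambda1 Lap = 0"
proof -
  have "eigenvalue Lap 0"
  proof (rule eigenvalue_laplacianI[of "\<lambda>_. 1"])
    show "\<exists>i<n. (\<lambda>_. 1::real) i \<noteq> 0" using two_le_n by (intro exI[of _ 0]) simp
    show "laplace (\<lambda>_. 1) i = 0 * 1" for i by (simp add: laplace_def deg_def)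
  qed
  then show ?thesis
    unfolding lambda1_def using finite_laplacian_eigenvalues laplacian_eigenvalue_nonneg
    by (intro Min_eqI) auto
qed

lemma nonzero_eigenvalue_below_rayleigh:
  obtains \<mu> where "eigenvalue Lap \<mu>" "\<mu> \<noteq> 0"
    "\<And>z. (\<Sum>i<n. z i) = 0 \<Longrightarrow> \<mu> * (\<Sum>i<n. (z i)\<^sup>2) \<le> dirichlet z"
proof -
  obtain y where y: "y \<in> unit_mean_zero" and y_min: "\<forall>z\<in>unit_mean_zero. dirichlet y \<le> dirichlet z"
    using continuous_attains_inf[OF compact_unit_mean_zero unit_mean_zero_nonempty continuous_on_dirichlet]
    by auto
  have mean: "(\<Sum>i<n. y i) = 0" and unit: "(\<Sum>i<n. (y i)\<^sup>2) = 1"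
    using y unfolding unit_mean_zero_def by auto
  have rayleigh: "dirichlet y * (\<Sum>i<n. (z i)\<^sup>2) \<le> dirichlet z" if "(\<Sum>i<n. z i) = 0" for z
    using dirichlet_ge_if_ge_on_unit_mean_zero[OF y_min that] .
  have nz: "\<exists>i<n. y i \<noteq> 0"
  proof (rule ccontr)
    assume "\<not> ?thesis"
    then have "(\<Sum>i<n. (y i)\<^sup>2) = 0" by simp
    then show False using unit by simp
  qed
  show ?thesis
  proof
    show "eigenvalue Lap (dirichlet y)"
      by (rule eigenvalue_laplacianI[OF nz laplace_eq_if_minimizer[OF mean unit rayleigh]])
    show "dirichlet y \<noteq> 0" by (rule dirichlet_neq_0_if_mean_zero[OF mean nz])
  qed (rule rayleigh)
qed

lemma lambda2_laplacian_bounds: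
  assumes "eigenvalue Lap \<mu>" "\<mu> \<noteq> 0"
  shows "0 \<le> lambda2 Lap" "lambda2 Lap \<le> \<mu>"
proof -
  define S where "S = {k. eigenvalue Lap k \<and> (k \<noteq> lambda1 Lap \<or> order (lambda1 Lap) (char_poly Lap) \<ge> 2)}"
  have "finite S" by (rule finite_subset[OF _ finite_laplacian_eigenvalues]) (auto simp: S_def)
  moreover have "\<mu> \<in> S" using assms lambda1_laplacian by (simp add: S_def)
  ultimately have "Min S \<in> S" "Min S \<le> \<mu>" by (auto intro: Min_in)
  moreover have "lambda2 Lap = Min S" unfolding lambda2_def S_def ..
  ultimately have "lambda2 Lap \<in> S" "lambda2 Lap \<le> \<mu>" by simp_all
  then show "0 \<le> lambda2 Lap" "lambda2 Lap \<le> \<mu>"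
    unfolding S_def using laplacian_eigenvalue_nonneg by auto
qed

lemma lambda2_laplacian_nonneg: "0 \<le> lambda2 Lap"
proof -
  obtain \<mu> where "eigenvalue Lap \<mu>" "\<mu> \<noteq> 0"
    and "\<And>z. (\<Sum>i<n. z i) = 0 \<Longrightarrow> \<mu> * (\<Sum>i<n. (z i)\<^sup>2) \<le> dirichlet z"
    using nonzero_eigenvalue_below_rayleigh by blast
  then show ?thesis by (intro lambda2_laplacian_bounds(1))
qed

lemma lambda2_le_dirichlet:
  assumes "(\<Sum>i<n. z i) = 0"
  shows "lambda2 Lap * (\<Sum>i<n. (z i)\<^sup>2) \<le> dirichlet z"
proof -
  obtain \<mu> where \<mu>: "eigenvalue Lap \<mu>" "\<mu> \<noteq> 0"
    and rayleigh: "\<And>z. (\<Sum>i<n. z i) = 0 \<Longrightarrow> \<mu> * (\<Sum>i<n. (z i)\<^sup>2) \<le> dirichlet z"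
    using nonzero_eigenvalue_below_rayleigh by blast
  have "lambda2 Lap * (\<Sum>i<n. (z i)\<^sup>2) \<le> \<mu> * (\<Sum>i<n. (z i)\<^sup>2)"
    using lambda2_laplacian_bounds(2)[OF \<mu>] by (intro mult_right_mono sum_nonneg) auto
  then show ?thesis using rayleigh[OF assms] by linarith
qed

end

section \<open>One round of the protocol\<close>

locale balancing = connected_graph E n for E n +
  fixes s :: "nat \<Rightarrow> real" and m :: nat
  assumes s_pos: "\<forall>i<n. s i > 0" and min_s: "Min (s ` {..<n}) = 1"
begin

abbreviation "smx \<equiv> smax n s"
abbreviation "\<Delta> \<equiv> real (max_deg E n)"
abbreviation "\<alpha> \<equiv> 4 * smx"
abbreviation "dg i \<equiv> real (deg E n i)"
abbreviation "mp x \<equiv> move_prob E n s m x"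

definition dmax :: "nat \<Rightarrow> nat \<Rightarrow> real" where
  "dmax a b = real (max (deg E n a) (deg E n b))"

lemma s_ge_1: "i < n \<Longrightarrow> 1 \<le> s i"
  using min_s Min_le[of "s ` {..<n}" "s i"] by auto

lemma s_le_smax: "i < n \<Longrightarrow> s i \<le> smx"
  unfolding smax_def by (rule Max_ge) auto

lemma smax_ge_1: "1 \<le> smx"
  using s_ge_1[of 0] s_le_smax[of 0] two_le_n by linarith

lemma dg_ge_1: "i < n \<Longrightarrow> 1 \<le> dg i"
  using deg_ge_1 by simp

lemma dg_le_max_deg: "i < n \<Longrightarrow> dg i \<le> \<Delta>"
  unfolding max_deg_def by (simp add: Max_ge)

lemma max_deg_ge_1: "\<Delta> \<ge> 1"
  using dg_le_max_deg[of 0] dg_ge_1[of 0] two_le_n by simp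

lemma dmax_ge: "dg a \<le> dmax a b" "dg b \<le> dmax a b"
  unfolding dmax_def by auto

lemma dmax_le: "a < n \<Longrightarrow> b < n \<Longrightarrow> dmax a b \<le> \<Delta>"
  unfolding dmax_def using dg_le_max_deg[of a] dg_le_max_deg[of b] by (auto simp: max_def)

definition w :: "(nat \<Rightarrow> nat) \<Rightarrow> nat \<Rightarrow> real" where
  "w x a = real (load m x a)"

definition l :: "(nat \<Rightarrow> nat) \<Rightarrow> nat \<Rightarrow> real" where
  "l x a = w x a / s a"

text \<open>The expected number of tasks moving from \<open>a\<close> to \<open>b\<close>.\<close>

definition flow :: "(nat \<Rightarrow> nat) \<Rightarrow> nat \<Rightarrow> nat \<Rightarrow> real" where
  "flow x a b = w x a * mp x a b / dg a"

lemma w_nonneg: "0 \<le> w x a"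
  unfolding w_def by simp

lemma l_nonneg: "a < n \<Longrightarrow> 0 \<le> l x a"
  unfolding l_def using s_pos by (intro divide_nonneg_pos w_nonneg) auto

lemma move_prob_eq:
  "mp x a b = (if l x a - l x b > 1 / s b
               then dg a / dmax a b * (l x a - l x b) / (\<alpha> * (1 / s a + 1 / s b) * w x a) else 0)"
  unfolding move_prob_def Let_def l_def w_def dmax_def by simp

lemma w_pos_if_moving:
  assumes "a < n" "b < n" "l x a - l x b > 1 / s b"
  shows "w x a > 0"
proof -
  have "l x a > 0"
    using assms l_nonneg[of b x] s_pos by (smt (verit) divide_pos_pos)
  then show ?thesis unfolding l_def using s_pos[rule_format, OF assms(1)] by (simp add: zero_less_divide_iff)
qed

lemma move_prob_bounds:
  assumes a: "a < n" and b: "b \<in> N a"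
  shows "0 \<le> mp x a b" "mp x a b \<le> 1 / 4"
proof -
  have "0 \<le> mp x a b \<and> mp x a b \<le> 1/4"
  proof (cases "l x a - l x b > 1 / s b")
    case False
    then show ?thesis by (simp add: move_prob_eq)
  next
    case True
    have b_lt: "b < n" using b nbrs_less by auto
    have s: "s a > 0" "s b > 0" using s_pos a b_lt by auto
    have w: "w x a > 0" using w_pos_if_moving[OF a b_lt True] .
    define \<sigma> where "\<sigma> = 1 / s a + 1 / s b"
    have \<sigma>: "\<sigma> > 0" unfolding \<sigma>_def using s by (intro add_pos_pos) auto
    have "l x a - l x b \<le> l x a" using l_nonneg[OF b_lt] by simp
    also have "l x a \<le> \<sigma> * w x a" unfolding l_def \<sigma>_def using s w by (simp add: field_simps)
    finally have q1: "(l x a - l x b) / (\<sigma> * w x a) \<le> 1" using \<sigma> w by simp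
    have "0 \<le> l x a - l x b" using True s by (smt (verit) divide_pos_pos)
    then have q0: "0 \<le> (l x a - l x b) / (\<sigma> * w x a)" using \<sigma> w by simp
    have r: "0 \<le> dg a / dmax a b" "dg a / dmax a b \<le> 1"
      using dmax_ge[of a b] dg_ge_1[OF a] by auto
    define P where "P = (dg a / dmax a b) * ((l x a - l x b) / (\<sigma> * w x a))"
    have "0 \<le> P" "P \<le> 1"
      unfolding P_def by (rule mult_nonneg_nonneg[OF r(1) q0], rule mult_le_one[OF r(2) q0 q1])
    moreover have "mp x a b = P / \<alpha>"
      using True unfolding move_prob_eq \<sigma>_def P_def by (simp add: field_simps)
    moreover have "\<alpha> \<ge> 4" using smax_ge_1 by simp
    moreover have "0 \<le> P / c \<and> P / c \<le> 1 / 4" if "0 \<le> P" "P \<le> 1" "c \<ge> 4" for P c :: real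
      using that by (auto simp: divide_simps)
    ultimately show ?thesis by simp
  qed
  then show "0 \<le> mp x a b" "mp x a b \<le> 1 / 4" by auto
qed

lemma flow_eq:
  assumes a: "a < n" and b: "b \<in> N a"
  shows "flow x a b = (if l x a - l x b > 1 / s b
                       then (l x a - l x b) / (dmax a b * \<alpha> * (1 / s a + 1 / s b)) else 0)"
proof (cases "l x a - l x b > 1 / s b")
  case False
  then show ?thesis unfolding flow_def by (simp add: move_prob_eq)
next
  case True
  have cancel: "v * (g / d * \<delta> / (A * \<sigma> * v)) / g = \<delta> / (d * A * \<sigma>)"
    if "g > 0" "d > 0" "v > 0" "A > 0" "\<sigma> > 0" for g d v A \<sigma> \<delta> :: real
    using that by (simp add: field_simps)
  define \<sigma> where "\<sigma> = 1 / s a + 1 / s b"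
  have b_lt: "b < n" using b nbrs_less by auto
  have "s a > 0" "s b > 0" using s_pos a b_lt by auto
  then have \<sigma>: "\<sigma> > 0" unfolding \<sigma>_def by (intro add_pos_pos) auto
  have d: "dg a > 0" "dmax a b > 0" using dg_ge_1[OF a] dmax_ge[of a b] by auto
  have w: "w x a > 0" using w_pos_if_moving[OF a b_lt True] .
  have \<alpha>: "\<alpha> > 0" using smax_ge_1 by simp
  have "flow x a b = w x a * (dg a / dmax a b * (l x a - l x b) / (\<alpha> * \<sigma> * w x a)) / dg a"
    using True unfolding flow_def move_prob_eq \<sigma>_def by simp
  also have "\<dots> = (l x a - l x b) / (dmax a b * \<alpha> * \<sigma>)"
    by (rule cancel[OF d w \<alpha> \<sigma>])
  finally show ?thesis using True unfolding \<sigma>_def by simp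
qed

lemma flow_antisym:
  assumes a: "a < n" and b: "b \<in> N a"
  shows "flow x a b * flow x b a = 0"
proof -
  have b_lt: "b < n" using nbrs_less[OF b] .
  have "1 / s b > 0" "1 / s a > 0" using s_pos a b_lt by simp_all
  show ?thesis
  proof (cases "l x a - l x b > 1 / s b")
    case True
    then have "\<not> l x b - l x a > 1 / s a" using \<open>1 / s b > 0\<close> \<open>1 / s a > 0\<close> by linarith
    then show ?thesis using flow_eq[OF b_lt nbrs_sym[OF b a]] by simp
  next
    case False
    then show ?thesis using flow_eq[OF a b] by simp
  qed
qed

lemma expectation_task_step:
  assumes a: "a < n"
  shows "measure_pmf.expectation (task_step E n s m x a) g
           = (\<Sum>b\<in>N a. mp x a b * g b + (1 - mp x a b) * g a) / dg a"
proof -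
  have "task_step E n s m x a
      = pmf_of_set (N a) \<bind> (\<lambda>b. map_pmf (\<lambda>c. if c then b else a) (bernoulli_pmf (mp x a b)))"
    unfolding task_step_def map_pmf_def ..
  then have "measure_pmf.expectation (task_step E n s m x a) g =
      (\<Sum>b\<in>N a. measure_pmf.expectation (map_pmf (\<lambda>c. if c then b else a) (bernoulli_pmf (mp x a b))) g
                  /\<^sub>R real (card (N a)))"
    using nbrs_nonempty[OF a] by (simp add: pmf_expectation_bind_pmf_of_set)
  also have "\<dots> = (\<Sum>b\<in>N a. (mp x a b * g b + (1 - mp x a b) * g a) / dg a)"
  proof (rule sum.cong[OF refl])
    fix b assume "b \<in> N a"
    then have "0 \<le> mp x a b" "mp x a b \<le> 1 / 4" using move_prob_bounds[OF a, where x=x] by auto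
    then have "0 \<le> mp x a b" "mp x a b \<le> 1" by auto
    then show "measure_pmf.expectation (map_pmf (\<lambda>c. if c then b else a) (bernoulli_pmf (mp x a b))) g
                 /\<^sub>R real (card (N a)) = (mp x a b * g b + (1 - mp x a b) * g a) / dg a"
      by (simp add: deg_def divide_inverse_commute algebra_simps)
  qed
  finally show ?thesis by (simp add: sum_divide_distrib)
qed

lemma set_task_step: "a < n \<Longrightarrow> y \<in> set_pmf (task_step E n s m x a) \<Longrightarrow> y < n"
  using nbrs_less nbrs_nonempty unfolding task_step_def by (auto split: if_splits)

definition land_prob :: "(nat \<Rightarrow> nat) \<Rightarrow> nat \<Rightarrow> nat \<Rightarrow> real" where
  "land_prob x a i = measure_pmf.expectation (task_step E n s m x a) (ind i)"

text \<open>The load of processor i in the perfectly balanced state.\<close>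

definition target :: "nat \<Rightarrow> real" where
  "target i = real m * s i / Stot n s"

lemma load_eq_sum_ind: "real (load m y i) = (\<Sum>k<m. ind i (y k))"
proof -
  have "{k. k < m \<and> y k = i} = {k\<in>{..<m}. y k = i}" by auto
  then have "real (load m y i) = (\<Sum>k\<in>{k\<in>{..<m}. y k = i}. 1)" unfolding load_def by simp
  also have "\<dots> = (\<Sum>k<m. ind i (y k))" unfolding ind_def by (rule sum.inter_filter) simp
  finally show ?thesis .
qed

lemma Psi0_eq_sum_ind: "Psi0 n s m y = (\<Sum>i<n. ((\<Sum>k<m. ind i (y k)) - target i)\<^sup>2 / s i)"
  unfolding Psi0_def load_eq_sum_ind target_def ..

lemma abs_Psi0_term_le:
  assumes "i < n"
  shows "\<bar>((\<Sum>k<m. ind i (y k)) - c)\<^sup>2 / s i\<bar> \<le> (real m + \<bar>c\<bar>)\<^sup>2 / s i"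
proof -
  have s: "s i > 0" using s_pos assms by auto
  have "0 \<le> (\<Sum>k<m. ind i (y k))" "(\<Sum>k<m. ind i (y k)) \<le> (\<Sum>k<m. 1)"
    by (intro sum_nonneg sum_mono; simp add: ind_def)+
  then have "\<bar>(\<Sum>k<m. ind i (y k)) - c\<bar> \<le> real m + \<bar>c\<bar>" by simp
  then have "((\<Sum>k<m. ind i (y k)) - c)\<^sup>2 \<le> (real m + \<bar>c\<bar>)\<^sup>2"
    by (metis abs_ge_zero power2_abs power_mono)
  then have "((\<Sum>k<m. ind i (y k)) - c)\<^sup>2 / s i \<le> (real m + \<bar>c\<bar>)\<^sup>2 / s i"
    using s by (simp add: divide_right_mono)
  then show ?thesis using s by simp
qed

lemma abs_Psi0_le: "\<bar>Psi0 n s m y\<bar> \<le> (\<Sum>i<n. (real m + \<bar>target i\<bar>)\<^sup>2 / s i)"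
  unfolding Psi0_eq_sum_ind
  by (rule order_trans[OF sum_abs sum_mono]) (rule abs_Psi0_term_le, simp)

lemma expectation_round_Psi0:
  "measure_pmf.expectation (round_step E n s m x) (Psi0 n s m) =
     (\<Sum>i<n. (((\<Sum>k<m. land_prob x (x k) i) - target i)\<^sup>2
              + (\<Sum>k<m. land_prob x (x k) i * (1 - land_prob x (x k) i))) / s i)"
proof -
  let ?M = "Pi_pmf {..<m} 0 (\<lambda>k. task_step E n s m x (x k))"
  have "measure_pmf.expectation (round_step E n s m x) (Psi0 n s m) =
        measure_pmf.expectation ?M (\<lambda>y. \<Sum>i<n. ((\<Sum>k<m. ind i (y k)) - target i)\<^sup>2 / s i)"
    unfolding round_step_def Psi0_eq_sum_ind ..
  also have "\<dots> = (\<Sum>i<n. measure_pmf.expectation ?M (\<lambda>y. ((\<Sum>k<m. ind i (y k)) - target i)\<^sup>2) / s i)"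
    by (subst Bochner_Integration.integral_sum) (auto intro: integrable_pmf_bounded abs_Psi0_term_le)
  also have "\<dots> = (\<Sum>i<n. (((\<Sum>k<m. land_prob x (x k) i) - target i)\<^sup>2
              + (\<Sum>k<m. land_prob x (x k) i * (1 - land_prob x (x k) i))) / s i)"
    by (simp add: expectation_Pi_pmf_count_sq land_prob_def)
  finally show ?thesis .
qed

lemma land_prob_eq:
  "a < n \<Longrightarrow> land_prob x a i = (\<Sum>b\<in>N a. mp x a b * ind i b + (1 - mp x a b) * ind i a) / dg a"
  unfolding land_prob_def by (rule expectation_task_step)

lemma land_prob_bounds:
  assumes a: "a < n"
  shows "0 \<le> land_prob x a i" "land_prob x a i \<le> 1"
proof -
  define t where "t b = mp x a b * ind i b + (1 - mp x a b) * ind i a" for b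
  have t: "0 \<le> t b" "t b \<le> 1" if "b \<in> N a" for b
    using move_prob_bounds[OF a that, where x=x] unfolding t_def by (auto simp: ind_def)
  have "0 \<le> sum t (N a)" using t(1) by (rule sum_nonneg)
  moreover have "sum t (N a) \<le> (\<Sum>b\<in>N a. 1)" using t(2) by (rule sum_mono)
  moreover have "dg a > 0" using dg_ge_1[OF a] by simp
  ultimately show "0 \<le> land_prob x a i" "land_prob x a i \<le> 1"
    unfolding land_prob_eq[OF a] t_def[symmetric] by (auto simp: deg_def)
qed

lemma w_land_prob:
  assumes a: "a < n"
  shows "w x a * land_prob x a i
           = (\<Sum>b\<in>N a. flow x a b * ind i b) + (if a = i then w x a - (\<Sum>b\<in>N a. flow x a b) else 0)"
proof -
  have "w x a * land_prob x a i = (\<Sum>b\<in>N a. flow x a b * ind i b + ind i a * (w x a / dg a - flow x a b))"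
    unfolding land_prob_eq[OF a] flow_def
    by (simp add: sum_distrib_left sum_divide_distrib add_divide_distrib diff_divide_distrib algebra_simps)
  also have "\<dots> = (\<Sum>b\<in>N a. flow x a b * ind i b) + ind i a * (w x a - (\<Sum>b\<in>N a. flow x a b))"
    using dg_ge_1[OF a] nbrs_nonempty[OF a]
    by (simp add: sum.distrib sum_distrib_left[symmetric] sum_subtractf deg_def)
  finally show ?thesis by (simp add: ind_def)
qed

lemma expected_load:
  assumes i: "i < n"
  shows "(\<Sum>a<n. w x a * land_prob x a i) = w x i + (\<Sum>b\<in>N i. flow x b i) - (\<Sum>b\<in>N i. flow x i b)"
proof -
  have inflow: "(\<Sum>a<n. \<Sum>b\<in>N a. flow x a b * ind i b) = (\<Sum>b\<in>N i. flow x b i)"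
  proof -
    have "(\<Sum>a<n. \<Sum>b\<in>N a. flow x a b * ind i b) = edge_sum (\<lambda>a b. flow x b a * ind i a)"
      by (subst edge_sum_swap) (simp add: edge_sum_def)
    also have "\<dots> = (\<Sum>a<n. ind i a * (\<Sum>b\<in>N a. flow x b a))"
      unfolding edge_sum_def by (simp add: sum_distrib_left mult.commute)
    also have "\<dots> = (\<Sum>b\<in>N i. flow x b i)" using i by (simp add: sum_ind_mult)
    finally show ?thesis .
  qed
  have "(\<Sum>a<n. w x a * land_prob x a i)
      = (\<Sum>a<n. (\<Sum>b\<in>N a. flow x a b * ind i b) + (if a = i then w x a - (\<Sum>b\<in>N a. flow x a b) else 0))"
    by (intro sum.cong refl) (simp add: w_land_prob)
  also have "\<dots> = (\<Sum>b\<in>N i. flow x b i) + (w x i - (\<Sum>b\<in>N i. flow x i b))"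
    using i by (simp add: sum.distrib inflow)
  finally show ?thesis by simp
qed

text \<open>The left-hand side is the variance of the load of i after the round.\<close>

lemma load_variance_le:
  assumes i: "i < n"
  shows "(\<Sum>a<n. w x a * land_prob x a i * (1 - land_prob x a i))
           \<le> (\<Sum>b\<in>N i. flow x i b) + (\<Sum>b\<in>N i. flow x b i)"
proof -
  have self: "w x i * land_prob x i i = w x i - (\<Sum>b\<in>N i. flow x i b)"
  proof -
    have "(\<Sum>b\<in>N i. flow x i b * ind i b) = 0"
      by (intro sum.neutral) (auto simp: ind_def dest: nbrs_irrefl)
    then show ?thesis using w_land_prob[OF i, where i=i] by simp
  qed
  have term_le: "w x a * land_prob x a i * (1 - land_prob x a i)
      \<le> w x a * land_prob x a i - (if a = i then 2 * (w x i * land_prob x i i) - w x i else 0)"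
    if a: "a < n" for a
  proof -
    have p: "0 \<le> land_prob x a i" "land_prob x a i \<le> 1" using land_prob_bounds[OF a] by auto
    have w: "0 \<le> w x a" by (rule w_nonneg)
    show ?thesis
    proof (cases "a = i")
      case True
      have "w x a * land_prob x a i * (1 - land_prob x a i) \<le> w x a * (1 - land_prob x a i)"
        using p w by (intro mult_right_mono) (auto intro: mult_left_le)
      then show ?thesis using True by (simp add: algebra_simps)
    next
      case False
      have "w x a * land_prob x a i * (1 - land_prob x a i) \<le> w x a * land_prob x a i"
        using p w by (intro mult_left_le) auto
      then show ?thesis using False by simp
    qed
  qed
  have "(\<Sum>a<n. w x a * land_prob x a i * (1 - land_prob x a i))
      \<le> (\<Sum>a<n. w x a * land_prob x a i - (if a = i then 2 * (w x i * land_prob x i i) - w x i else 0))"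
    by (intro sum_mono term_le) simp
  also have "\<dots> = (\<Sum>a<n. w x a * land_prob x a i) - (2 * (w x i * land_prob x i i) - w x i)"
    using i by (simp add: sum_subtractf)
  also have "\<dots> = (\<Sum>b\<in>N i. flow x i b) + (\<Sum>b\<in>N i. flow x b i)"
    unfolding expected_load[OF i] self by simp
  finally show ?thesis .
qed

lemma sum_tasks_by_processor:
  assumes x: "\<forall>k<m. x k < n"
  shows "(\<Sum>k<m. g (x k)) = (\<Sum>a<n. w x a * g a)"
proof -
  have "(\<Sum>a<n. w x a * g a) = (\<Sum>a<n. \<Sum>k\<in>{k\<in>{..<m}. x k = a}. g (x k))"
  proof (intro sum.cong refl)
    fix a
    have "{k. k < m \<and> x k = a} = {k\<in>{..<m}. x k = a}" by auto
    then have "w x a = real (card {k\<in>{..<m}. x k = a})" unfolding w_def load_def by simp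
    then show "w x a * g a = (\<Sum>k\<in>{k\<in>{..<m}. x k = a}. g (x k))" by simp
  qed
  also have "\<dots> = (\<Sum>k<m. g (x k))"
    using x by (intro sum.group) auto
  finally show ?thesis ..
qed

section \<open>The expected potential after one round\<close>

definition excess :: "(nat \<Rightarrow> nat) \<Rightarrow> nat \<Rightarrow> real" where
  "excess x i = w x i - target i"

definition net_inflow :: "(nat \<Rightarrow> nat) \<Rightarrow> nat \<Rightarrow> real" where
  "net_inflow x i = (\<Sum>b\<in>N i. flow x b i - flow x i b)"

definition flow_volume :: "(nat \<Rightarrow> nat) \<Rightarrow> nat \<Rightarrow> real" where
  "flow_volume x i = (\<Sum>b\<in>N i. flow x i b + flow x b i)"

definition gap :: "(nat \<Rightarrow> nat) \<Rightarrow> nat \<Rightarrow> nat \<Rightarrow> real" where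
  "gap x i j = l x i - l x j"

lemma Psi0_excess: "Psi0 n s m x = (\<Sum>i<n. (excess x i)\<^sup>2 / s i)"
  unfolding Psi0_def excess_def w_def target_def ..

lemma expectation_round_Psi0_le:
  assumes x: "\<forall>k<m. x k < n"
  shows "measure_pmf.expectation (round_step E n s m x) (Psi0 n s m)
           \<le> Psi0 n s m x + (\<Sum>i<n. 2 * excess x i * net_inflow x i / s i)
              + (\<Sum>i<n. (net_inflow x i)\<^sup>2 / s i) + (\<Sum>i<n. flow_volume x i / s i)"
proof -
  have "((\<Sum>k<m. land_prob x (x k) i) - target i)\<^sup>2 + (\<Sum>k<m. land_prob x (x k) i * (1 - land_prob x (x k) i))
        \<le> (excess x i + net_inflow x i)\<^sup>2 + flow_volume x i" if i: "i < n" for i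
  proof -
    have "(\<Sum>k<m. land_prob x (x k) i) = (\<Sum>a<n. w x a * land_prob x a i)"
      by (rule sum_tasks_by_processor[OF x])
    then have "(\<Sum>k<m. land_prob x (x k) i) - target i = excess x i + net_inflow x i"
      unfolding expected_load[OF i] excess_def net_inflow_def by (simp add: sum_subtractf)
    moreover have "(\<Sum>k<m. land_prob x (x k) i * (1 - land_prob x (x k) i)) \<le> flow_volume x i"
      unfolding sum_tasks_by_processor[OF x, of "\<lambda>a. land_prob x a i * (1 - land_prob x a i)"]
        flow_volume_def
      using load_variance_le[OF i, of x] by (simp add: sum.distrib mult.assoc)
    ultimately show ?thesis by simp
  qed
  then have "measure_pmf.expectation (round_step E n s m x) (Psi0 n s m)
      \<le> (\<Sum>i<n. ((excess x i + net_inflow x i)\<^sup>2 + flow_volume x i) / s i)"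
    unfolding expectation_round_Psi0 using s_pos by (intro sum_mono divide_right_mono) auto
  also have "\<dots> = (\<Sum>i<n. (excess x i)\<^sup>2 / s i + 2 * excess x i * net_inflow x i / s i
                          + (net_inflow x i)\<^sup>2 / s i + flow_volume x i / s i)"
    by (intro sum.cong refl) (simp add: power2_eq_square add_divide_distrib algebra_simps)
  finally show ?thesis unfolding Psi0_excess by (simp add: sum.distrib)
qed

lemma sum_excess_net_inflow:
  "(\<Sum>i<n. 2 * excess x i * net_inflow x i / s i) = - 2 * edge_sum (\<lambda>i j. gap x i j * flow x i j)"
proof -
  define dev where "dev i = l x i - real m / Stot n s" for i
  have excess_div: "excess x i / s i = dev i" if "i < n" for i
    using s_pos that unfolding excess_def l_def target_def dev_def by (auto simp: diff_divide_distrib)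
  have "(\<Sum>i<n. 2 * excess x i * net_inflow x i / s i) = (\<Sum>i<n. 2 * dev i * net_inflow x i)"
    by (intro sum.cong refl) (simp add: excess_div[symmetric])
  also have "\<dots> = 2 * (edge_sum (\<lambda>i j. dev i * flow x j i) - edge_sum (\<lambda>i j. dev i * flow x i j))"
    unfolding edge_sum_def net_inflow_def
    by (simp add: sum_distrib_left sum_subtractf right_diff_distrib mult.assoc)
  also have "edge_sum (\<lambda>i j. dev i * flow x j i) = edge_sum (\<lambda>i j. dev j * flow x i j)"
    by (rule edge_sum_swap)
  also have "edge_sum (\<lambda>i j. dev j * flow x i j) - edge_sum (\<lambda>i j. dev i * flow x i j)
      = - edge_sum (\<lambda>i j. (dev i - dev j) * flow x i j)"
    unfolding edge_sum_def by (simp add: sum_negf[symmetric] sum_subtractf[symmetric] algebra_simps)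
  also have "edge_sum (\<lambda>i j. (dev i - dev j) * flow x i j) = edge_sum (\<lambda>i j. gap x i j * flow x i j)"
    by (intro edge_sum_cong) (simp add: dev_def gap_def)
  finally show ?thesis by simp
qed

lemma sum_flow_volume:
  "(\<Sum>i<n. flow_volume x i / s i)
     = edge_sum (\<lambda>i j. if gap x i j > 1 / s j then gap x i j / (dmax i j * \<alpha>) else 0)"
proof -
  have "(\<Sum>i<n. flow_volume x i / s i) = edge_sum (\<lambda>i j. flow x i j / s i) + edge_sum (\<lambda>i j. flow x j i / s i)"
    unfolding flow_volume_def edge_sum_def by (simp add: sum_divide_distrib add_divide_distrib sum.distrib)
  also have "edge_sum (\<lambda>i j. flow x j i / s i) = edge_sum (\<lambda>i j. flow x i j / s j)"
    by (rule edge_sum_swap)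
  also have "edge_sum (\<lambda>i j. flow x i j / s i) + edge_sum (\<lambda>i j. flow x i j / s j)
      = edge_sum (\<lambda>i j. (1 / s i + 1 / s j) * flow x i j)"
    unfolding edge_sum_add[symmetric] by (intro edge_sum_cong) (simp add: algebra_simps)
  also have "\<dots> = edge_sum (\<lambda>i j. if gap x i j > 1 / s j then gap x i j / (dmax i j * \<alpha>) else 0)"
  proof (intro edge_sum_cong)
    fix i j assume i: "i < n" and j: "j \<in> N i"
    have cancel: "\<sigma> * (\<delta> / (d * A * \<sigma>)) = \<delta> / (d * A)" if "\<sigma> > 0" for \<sigma> \<delta> d A :: real
      using that by simp
    have "1 / s i + 1 / s j > 0" using s_pos i nbrs_less[OF j] by (intro add_pos_pos) auto
    then show "(1 / s i + 1 / s j) * flow x i j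
        = (if gap x i j > 1 / s j then gap x i j / (dmax i j * \<alpha>) else 0)"
      using cancel[of "1 / s i + 1 / s j" "l x i - l x j" "dmax i j" \<alpha>]
      unfolding flow_eq[OF i j] gap_def by simp
  qed
  finally show ?thesis .
qed

lemma net_inflow_sq_le:
  assumes i: "i < n"
  shows "(net_inflow x i)\<^sup>2 \<le> dg i * (\<Sum>j\<in>N i. (flow x j i)\<^sup>2 + (flow x i j)\<^sup>2)"
proof -
  have "(net_inflow x i)\<^sup>2 \<le> (\<Sum>j\<in>N i. (flow x j i - flow x i j)\<^sup>2) * real (card (N i))"
    unfolding net_inflow_def by (rule sum_squared_le_sum_of_squares)
  also have "(\<Sum>j\<in>N i. (flow x j i - flow x i j)\<^sup>2) = (\<Sum>j\<in>N i. (flow x j i)\<^sup>2 + (flow x i j)\<^sup>2)"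
    using flow_antisym[OF i] by (intro sum.cong refl) (simp add: power2_eq_square algebra_simps)
  finally show ?thesis by (simp add: deg_def mult.commute)
qed

lemma flow_sq_le:
  assumes i: "i < n" and j: "j \<in> N i"
  shows "(dg i / s i + dg j / s j) * (flow x i j)\<^sup>2 \<le> gap x i j * flow x i j / \<alpha>"
proof -
  have s: "s i > 0" "s j > 0" using s_pos i nbrs_less[OF j] by auto
  have sq: "d * \<sigma> * (\<delta> / (d * A * \<sigma>))\<^sup>2 = \<delta> * (\<delta> / (d * A * \<sigma>)) / A"
    if "\<sigma> > 0" "d > 0" "A > 0" for \<sigma> \<delta> d A :: real
    using that by (simp add: field_simps power2_eq_square)
  have \<sigma>: "1 / s i + 1 / s j > 0" using s by (intro add_pos_pos) auto
  have d: "dmax i j > 0" using dg_ge_1[OF i] dmax_ge(1)[of i j] by simp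
  have \<alpha>: "\<alpha> > 0" using smax_ge_1 by simp
  have "(dg i / s i + dg j / s j) * (flow x i j)\<^sup>2 \<le> (dmax i j / s i + dmax i j / s j) * (flow x i j)\<^sup>2"
    using dmax_ge[where a=i and b=j] s by (intro mult_right_mono add_mono divide_right_mono) auto
  also have "\<dots> = dmax i j * (1 / s i + 1 / s j) * (flow x i j)\<^sup>2"
    by (simp add: algebra_simps)
  also have "\<dots> = gap x i j * flow x i j / \<alpha>"
    using sq[OF \<sigma> d \<alpha>, of "l x i - l x j"] unfolding flow_eq[OF i j] gap_def by simp
  finally show ?thesis .
qed

lemma sum_net_inflow_sq_le:
  "(\<Sum>i<n. (net_inflow x i)\<^sup>2 / s i) \<le> edge_sum (\<lambda>i j. gap x i j * flow x i j) / \<alpha>"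
proof -
  have "(\<Sum>i<n. (net_inflow x i)\<^sup>2 / s i)
      \<le> (\<Sum>i<n. dg i / s i * (\<Sum>j\<in>N i. (flow x j i)\<^sup>2 + (flow x i j)\<^sup>2))"
  proof (rule sum_mono)
    fix i assume "i \<in> {..<n}"
    then have i: "i < n" and "s i > 0" using s_pos by auto
    then have "(net_inflow x i)\<^sup>2 / s i \<le> dg i * (\<Sum>j\<in>N i. (flow x j i)\<^sup>2 + (flow x i j)\<^sup>2) / s i"
      using net_inflow_sq_le[OF i] by (simp add: divide_right_mono)
    then show "(net_inflow x i)\<^sup>2 / s i \<le> dg i / s i * (\<Sum>j\<in>N i. (flow x j i)\<^sup>2 + (flow x i j)\<^sup>2)"
      by simp
  qed
  also have "\<dots> = edge_sum (\<lambda>i j. dg i / s i * (flow x j i)\<^sup>2) + edge_sum (\<lambda>i j. dg i / s i * (flow x i j)\<^sup>2)"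
    unfolding edge_sum_def by (simp add: sum_distrib_left sum.distrib distrib_left)
  also have "edge_sum (\<lambda>i j. dg i / s i * (flow x j i)\<^sup>2) = edge_sum (\<lambda>i j. dg j / s j * (flow x i j)\<^sup>2)"
    by (rule edge_sum_swap)
  also have "edge_sum (\<lambda>i j. dg j / s j * (flow x i j)\<^sup>2) + edge_sum (\<lambda>i j. dg i / s i * (flow x i j)\<^sup>2)
      = edge_sum (\<lambda>i j. (dg i / s i + dg j / s j) * (flow x i j)\<^sup>2)"
    by (simp add: edge_sum_add[symmetric] algebra_simps)
  also have "\<dots> \<le> edge_sum (\<lambda>i j. gap x i j * flow x i j / \<alpha>)"
    by (intro edge_sum_mono flow_sq_le)
  finally show ?thesis by (simp add: edge_sum_divide)
qed

lemma Stot_pos: "Stot n s > 0"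
  unfolding Stot_def using s_pos two_le_n by (intro sum_pos) (auto simp: lessThan_empty_iff)

lemma Psi0_eq_weighted_dev: "Psi0 n s m x = (\<Sum>i<n. s i * (l x i - real m / Stot n s)\<^sup>2)"
  unfolding Psi0_def
proof (intro sum.cong refl)
  fix i assume "i \<in> {..<n}"
  then have s: "s i > 0" using s_pos by auto
  then have "l x i - real m / Stot n s = (real (load m x i) - real m * s i / Stot n s) / s i"
    unfolding l_def w_def by (simp add: diff_divide_distrib)
  then show "(real (load m x i) - real m * s i / Stot n s)\<^sup>2 / s i = s i * (l x i - real m / Stot n s)\<^sup>2"
    using s by (simp add: power_divide power2_eq_square)
qed

lemma Psi0_le_weighted_dev:
  assumes x: "\<forall>k<m. x k < n"
  shows "Psi0 n s m x \<le> (\<Sum>i<n. s i * (l x i - c)\<^sup>2)"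
proof -
  define \<mu> where "\<mu> = real m / Stot n s"
  have "(\<Sum>i<n. s i * l x i) = (\<Sum>i<n. w x i)"
    by (intro sum.cong refl) (use s_pos in \<open>auto simp: l_def\<close>)
  also have "\<dots> = real m" using sum_tasks_by_processor[OF x, of "\<lambda>_. 1"] by simp
  finally have "(\<Sum>i<n. s i * l x i) = real m" .
  moreover have "(\<Sum>i<n. s i * (l x i - \<mu>)) = (\<Sum>i<n. s i * l x i) - (\<Sum>i<n. s i) * \<mu>"
    by (simp add: right_diff_distrib sum_subtractf sum_distrib_right)
  ultimately have "(\<Sum>i<n. s i * (l x i - \<mu>)) = 0"
    using Stot_pos unfolding \<mu>_def Stot_def by simp
  moreover have "(\<Sum>i<n. s i * (l x i - c)\<^sup>2)
      = (\<Sum>i<n. s i * (l x i - \<mu>)\<^sup>2 + 2 * (\<mu> - c) * (s i * (l x i - \<mu>)) + (\<mu> - c)\<^sup>2 * s i)"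
    by (intro sum.cong refl) (simp add: power2_eq_square algebra_simps)
  moreover have "\<dots> = (\<Sum>i<n. s i * (l x i - \<mu>)\<^sup>2) + 2 * (\<mu> - c) * (\<Sum>i<n. s i * (l x i - \<mu>))
                        + (\<mu> - c)\<^sup>2 * Stot n s"
    unfolding Stot_def by (simp add: sum.distrib sum_distrib_left)
  ultimately show ?thesis unfolding Psi0_eq_weighted_dev \<mu>_def[symmetric] using Stot_pos by simp
qed

lemma edge_sum_gap_sq:
  "edge_sum (\<lambda>i j. (gap x i j)\<^sup>2) = 2 * edge_sum (\<lambda>i j. if gap x i j > 0 then (gap x i j)\<^sup>2 else 0)"
proof -
  have "edge_sum (\<lambda>i j. (gap x i j)\<^sup>2)
      = edge_sum (\<lambda>i j. if gap x i j > 0 then (gap x i j)\<^sup>2 else 0)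
        + edge_sum (\<lambda>i j. if gap x i j < 0 then (gap x i j)\<^sup>2 else 0)"
    unfolding edge_sum_add[symmetric] by (intro edge_sum_cong) auto
  also have "edge_sum (\<lambda>i j. if gap x i j < 0 then (gap x i j)\<^sup>2 else 0)
      = edge_sum (\<lambda>i j. if gap x j i < 0 then (gap x j i)\<^sup>2 else 0)"
    by (rule edge_sum_swap)
  also have "\<dots> = edge_sum (\<lambda>i j. if gap x i j > 0 then (gap x i j)\<^sup>2 else 0)"
    by (intro edge_sum_cong) (auto simp: gap_def power2_commute)
  finally show ?thesis by simp
qed

text \<open>The spectral step: Psi0 is the least weighted deviation of l from a constant, and the
  deviation from the unweighted mean of l is controlled by the Laplacian form of l.\<close>

lemma lambda2_Psi0_le:
  assumes x: "\<forall>k<m. x k < n"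
  shows "lambda2 Lap * Psi0 n s m x \<le> smx * edge_sum (\<lambda>i j. if gap x i j > 0 then (gap x i j)\<^sup>2 else 0)"
proof -
  define c where "c = (\<Sum>i<n. l x i) / real n"
  define z where "z i = l x i - c" for i
  have "Psi0 n s m x \<le> (\<Sum>i<n. s i * (z i)\<^sup>2)"
    unfolding z_def by (rule Psi0_le_weighted_dev[OF x])
  also have "\<dots> \<le> (\<Sum>i<n. smx * (z i)\<^sup>2)"
    using s_le_smax by (intro sum_mono mult_right_mono) auto
  also have "\<dots> = smx * (\<Sum>i<n. (z i)\<^sup>2)" by (simp add: sum_distrib_left)
  finally have "lambda2 Lap * Psi0 n s m x \<le> lambda2 Lap * (smx * (\<Sum>i<n. (z i)\<^sup>2))"
    using lambda2_laplacian_nonneg by (rule mult_left_mono)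
  also have "\<dots> = smx * (lambda2 Lap * (\<Sum>i<n. (z i)\<^sup>2))" by simp
  also have "\<dots> \<le> smx * dirichlet z"
  proof -
    have "(\<Sum>i<n. z i) = 0" unfolding z_def c_def using two_le_n by (simp add: sum_subtractf)
    then show ?thesis using lambda2_le_dirichlet smax_ge_1 by (intro mult_left_mono) auto
  qed
  also have "dirichlet z = edge_sum (\<lambda>i j. if gap x i j > 0 then (gap x i j)\<^sup>2 else 0)"
    using edge_sum_gap_sq[of x] unfolding dirichlet_def z_def gap_def by simp
  finally show ?thesis .
qed

lemma drift_term_le:
  assumes i: "i < n" and j: "j \<in> N i"
  shows "- 2 * (gap x i j * flow x i j) + gap x i j * flow x i j / \<alpha>
           + (if gap x i j > 1 / s j then gap x i j / (dmax i j * \<alpha>) else 0)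
           + (if gap x i j > 0 then (gap x i j)\<^sup>2 else 0) / (16 * \<Delta> * smx)
         \<le> 1 / (4 * smx * dg i)"
proof -
  have j_lt: "j < n" using nbrs_less[OF j] .
  have s: "s i \<ge> 1" "s j \<ge> 1" using s_ge_1 i j_lt by auto
  have d: "1 \<le> dg i" "dg i \<le> dmax i j" "dmax i j \<le> \<Delta>"
    using dg_ge_1[OF i] dmax_ge(1) dmax_le[OF i j_lt] by auto
  show ?thesis
  proof (cases "gap x i j > 1 / s j")
    case True
    have \<delta>: "gap x i j > 0" using True s by (smt (verit) divide_pos_pos)
    have "0 < 1 / s i" "1 / s i \<le> 1" "0 < 1 / s j" "1 / s j \<le> 1" using s by simp_all
    then have \<sigma>: "0 < 1 / s i + 1 / s j" "1 / s i + 1 / s j \<le> 2" by linarith+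
    have "flow x i j = gap x i j / (dmax i j * (4 * smx) * (1 / s i + 1 / s j))"
      using True unfolding flow_eq[OF i j] gap_def by simp
    then show ?thesis
      using drift_term_inequality[OF \<delta> \<sigma> smax_ge_1 d] True \<delta>
      by (simp add: power2_eq_square mult.assoc)
  next
    case False
    then have flow0: "flow x i j = 0" unfolding flow_eq[OF i j] gap_def by simp
    have "gap x i j \<le> 1" using False s by (smt (verit) divide_le_eq_1)
    then have "(if gap x i j > 0 then (gap x i j)\<^sup>2 else 0) \<le> 1"
      by (simp add: power_le_one)
    then have "(if gap x i j > 0 then (gap x i j)\<^sup>2 else 0) / (16 * \<Delta> * smx) \<le> 1 / (16 * \<Delta> * smx)"
      using d smax_ge_1 by (intro divide_right_mono) auto
    also have "\<dots> \<le> 1 / (4 * smx * dg i)"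
      using d smax_ge_1 by (intro divide_left_mono) (auto intro!: mult_pos_pos)
    finally show ?thesis using flow0 False by simp
  qed
qed

lemma edge_sum_inverse_deg: "edge_sum (\<lambda>i j. 1 / (4 * smx * dg i)) = real n / (4 * smx)"
proof -
  have "edge_sum (\<lambda>i j. 1 / (4 * smx * dg i)) = (\<Sum>i<n. dg i * (1 / (4 * smx * dg i)))"
    unfolding edge_sum_def by (simp add: deg_def)
  also have "\<dots> = (\<Sum>i<n. 1 / (4 * smx))"
  proof (intro sum.cong refl)
    fix i assume "i \<in> {..<n}"
    then have "dg i > 0" using dg_ge_1[of i] by simp
    then show "dg i * (1 / (4 * smx * dg i)) = 1 / (4 * smx)" using smax_ge_1 by (simp add: field_simps)
  qed
  finally show ?thesis by simp
qed

lemma round_Psi0_le: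
  assumes x: "\<forall>k<m. x k < n"
  shows "measure_pmf.expectation (round_step E n s m x) (Psi0 n s m)
           \<le> (1 - 2 / (32 * \<Delta> * smx\<^sup>2 / lambda2 Lap)) * Psi0 n s m x + real n / (4 * smx)"
proof -
  define A where "A = edge_sum (\<lambda>i j. gap x i j * flow x i j)"
  define B where "B = edge_sum (\<lambda>i j. if gap x i j > 1 / s j then gap x i j / (dmax i j * \<alpha>) else 0)"
  define C where "C = edge_sum (\<lambda>i j. if gap x i j > 0 then (gap x i j)\<^sup>2 else 0)"
  define K where "K = 16 * \<Delta> * smx"
  have K: "K > 0" unfolding K_def using max_deg_ge_1 smax_ge_1 by simp
  have "measure_pmf.expectation (round_step E n s m x) (Psi0 n s m) \<le> Psi0 n s m x - 2 * A + A / \<alpha> + B"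
    using expectation_round_Psi0_le[OF x] sum_net_inflow_sq_le[of x]
    unfolding sum_excess_net_inflow sum_flow_volume A_def B_def by simp
  moreover have "2 / (32 * \<Delta> * smx\<^sup>2 / lambda2 Lap) * Psi0 n s m x \<le> C / K"
  proof -
    have "2 / (32 * \<Delta> * smx\<^sup>2 / lambda2 Lap) * Psi0 n s m x = lambda2 Lap * Psi0 n s m x / (K * smx)"
      unfolding K_def by (simp add: power2_eq_square)
    also have "\<dots> \<le> smx * C / (K * smx)"
      using lambda2_Psi0_le[OF x] K smax_ge_1 unfolding C_def by (intro divide_right_mono) auto
    also have "\<dots> = C / K" using smax_ge_1 by simp
    finally show ?thesis .
  qed
  moreover have "- 2 * A + A / \<alpha> + B + C / K \<le> real n / (4 * smx)"
  proof -
    have "- 2 * A + A / \<alpha> + B + C / K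
        = edge_sum (\<lambda>i j. - 2 * (gap x i j * flow x i j) + gap x i j * flow x i j / \<alpha>
            + (if gap x i j > 1 / s j then gap x i j / (dmax i j * \<alpha>) else 0)
            + (if gap x i j > 0 then (gap x i j)\<^sup>2 else 0) / K)"
      unfolding A_def B_def C_def by (simp only: edge_sum_add edge_sum_cmult edge_sum_divide)
    also have "\<dots> \<le> edge_sum (\<lambda>i j. 1 / (4 * smx * dg i))"
      unfolding K_def by (intro edge_sum_mono drift_term_le)
    finally show ?thesis unfolding edge_sum_inverse_deg .
  qed
  ultimately show ?thesis by (simp add: algebra_simps)
qed

lemma state_dist_range:
  assumes "\<forall>x \<in> set_pmf mu0. \<forall>k<m. x k < n"
  shows "\<forall>x \<in> set_pmf (state_dist E n s m mu0 t). \<forall>k<m. x k < n"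
proof (induction t)
  case 0
  then show ?case using assms by simp
next
  case (Suc t)
  show ?case
  proof (intro ballI allI impI)
    fix y k assume y: "y \<in> set_pmf (state_dist E n s m mu0 (Suc t))" and k: "k < m"
    then obtain x where x: "x \<in> set_pmf (state_dist E n s m mu0 t)"
      and "y \<in> set_pmf (round_step E n s m x)" by auto
    then have "y k \<in> set_pmf (task_step E n s m x (x k))"
      using k unfolding round_step_def by (auto simp: set_Pi_pmf PiE_dflt_def)
    then show "y k < n" using set_task_step Suc.IH x k by blast
  qed
qed

lemma state_dist_Psi0_le:
  assumes "\<forall>x \<in> set_pmf mu0. \<forall>k<m. x k < n"
  shows "measure_pmf.expectation (state_dist E n s m mu0 (Suc t)) (Psi0 n s m)
    \<le> (1 - 2 / (32 * \<Delta> * smx\<^sup>2 / lambda2 Lap)) * measure_pmf.expectation (state_dist E n s m mu0 t) (Psi0 n s m)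
       + real n / (4 * smx)"
proof -
  define \<mu> where "\<mu> = state_dist E n s m mu0 t"
  define c where "c = 1 - 2 / (32 * \<Delta> * smx\<^sup>2 / lambda2 Lap)"
  define B where "B = (\<Sum>i<n. (real m + \<bar>target i\<bar>)\<^sup>2 / s i)"
  have bounded: "\<bar>Psi0 n s m y\<bar> \<le> B" for y unfolding B_def by (rule abs_Psi0_le)
  have "measure_pmf.expectation (state_dist E n s m mu0 (Suc t)) (Psi0 n s m)
      = measure_pmf.expectation \<mu> (\<lambda>x. measure_pmf.expectation (round_step E n s m x) (Psi0 n s m))"
    unfolding \<mu>_def by (simp add: expectation_bind_pmf_bounded[OF bounded])
  also have "\<dots> \<le> measure_pmf.expectation \<mu> (\<lambda>x. c * Psi0 n s m x + real n / (4 * smx))"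
  proof (rule integral_mono_AE)
    show "integrable \<mu> (\<lambda>x. measure_pmf.expectation (round_step E n s m x) (Psi0 n s m))"
      by (rule integrable_pmf_bounded[where B=B]) (rule abs_expectation_le[OF bounded])
    show "integrable \<mu> (\<lambda>x. c * Psi0 n s m x + real n / (4 * smx))"
      by (intro Bochner_Integration.integrable_add integrable_mult_right integrable_pmf_bounded[OF bounded]) simp
    show "AE x in \<mu>. measure_pmf.expectation (round_step E n s m x) (Psi0 n s m) \<le> c * Psi0 n s m x + real n / (4 * smx)"
      using state_dist_range[OF assms] unfolding c_def \<mu>_def by (intro AE_pmfI round_Psi0_le) auto
  qed
  also have "\<dots> = c * measure_pmf.expectation \<mu> (Psi0 n s m) + real n / (4 * smx)"
    using integrable_pmf_bounded[OF bounded, of \<mu>] by simp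
  finally show ?thesis unfolding c_def \<mu>_def .
qed

end

theorem lemma14:
  fixes E :: "nat \<Rightarrow> nat \<Rightarrow> bool" and n m t :: nat and s :: "nat \<Rightarrow> real"
    and mu0 :: "(nat \<Rightarrow> nat) pmf" and gamma :: real
  assumes "n \<ge> 2"
    and "simple_graph E n"
    and "graph_connected E n"
    and "\<forall>i<n. s i > 0"
    and "Min (s ` {..<n}) = 1"
    and "\<forall>x \<in> set_pmf mu0. \<forall>k<m. x k < n"
    and "gamma = 32 * real (max_deg E n) * (smax n s)\<^sup>2 / lambda2 (laplacian E n)"
    and "t \<ge> 1"
  shows "measure_pmf.expectation (state_dist E n s m mu0 t) (Psi0 n s m)
    \<le> (1 - 2 / gamma) * measure_pmf.expectation (state_dist E n s m mu0 (t - 1)) (Psi0 n s m)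
       + real n / (4 * smax n s)"
proof -
  interpret balancing E n s m
    by unfold_locales (use assms in auto)
  obtain t' where "t = Suc t'" using \<open>t \<ge> 1\<close> by (cases t) auto
  then show ?thesis using state_dist_Psi0_le[OF assms(6), of t'] assms(7) by simp
qed
end
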